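(* Let $S$ be a semibounded relation in $\mathfrak H$ with lower bound $\gamma\in\mathbb R$ and let $c\le\gamma$. For every semibounded selfadjoint extension $H$ of $S$ one has: $c\le H$ if and only if $\mathfrak t_{S_{{\rm K},c}}\le\mathfrak t_H$ (i.e. $S_{{\rm K},c}\le H$).
   Context: Linear relations in $\mathfrak H$ are linear subspaces of $\mathfrak H\times\mathfrak H$; $T^*$ adjoint, $T^{**}$ closure, $RT=\{\{f,h\}:\exists g,\{f,g\}\in T,\{g,h\}\in R\}$, $c+T=\{\{f,g+cf\}:\{f,g\}\in T\}$. $S$ is semibounded with lower bound $\gamma$ if $\gamma$ is the supremum of all $c$ with $(\varphi',\varphi)\ge c\|\varphi\|^2$ on $S$; $\mathfrak t(S)[\varphi,\psi]=(\varphi',\psi)$ on $\mathrm{dom}\,S$. A representing map for $\mathfrak t(S)-c$ is a linear operator $Q_c$ into a Hilbert space with $\mathrm{dom}\,Q_c=\mathrm{dom}\,S$ and $\mathfrak t(S)[\varphi,\psi]=c(\varphi,\psi)+(Q_c\varphi,Q_c\psi)$; companion relation $J_c=\{\{Q_c\varphi,\varphi'-c\varphi\}:\{\varphi,\varphi'\}\in S\}$; Kreĭn type extension $S_{{\rm K},c}=c+J_c^{**}J_c^*$. For a semibounded selfadjoint relation $H$, $\mathfrak t_H$ is its associated closed form (closure of $\mathfrak t(H)$). $\mathfrak t_1\le\mathfrak t_2$ means $\mathrm{dom}\,\mathfrak t_2\subset\mathrm{dom}\,\mathfrak t_1$ and $\mathfrak t_1[f,f]\le\mathfrak t_2[f,f]$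 on $\mathrm{dom}\,\mathfrak t_2$; $H\le K$ means $\mathfrak t_H\le\mathfrak t_K$; $c\le H$ means $(f',f)\ge c\|f\|^2$ for all $\{f,f'\}\in H$. *)

theory Defs
  imports "HOL-Analysis.Analysis" "HOL-Library.Complex_Order"
begin

class complex_vector = real_vector +
  fixes scaleC :: "complex \<Rightarrow> 'a \<Rightarrow> 'a"
  assumes scaleC_add_right: "scaleC a (x + y) = scaleC a x + scaleC a y"
    and scaleC_add_left: "scaleC (a + b) x = scaleC a x + scaleC b x"
    and scaleC_scaleC: "scaleC a (scaleC b x) = scaleC (a * b) x"
    and scaleC_one: "scaleC 1 x = x"
    and scaleR_scaleC: "scaleR r x = scaleC (complex_of_real r) x"

class complex_inner = complex_vector + real_normed_vector +
  fixes cinner :: "'a \<Rightarrow> 'a \<Rightarrow> complex"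
  assumes cinner_commute: "cinner x y = cnj (cinner y x)"
    and cinner_add_left: "cinner (x + y) z = cinner x z + cinner y z"
    and cinner_scaleC_left: "cinner (scaleC r x) y = r * cinner x y"
    and cinner_ge_zero: "0 \<le> Re (cinner x x)"
    and cinner_eq_zero_iff: "cinner x x = 0 \<longleftrightarrow> x = 0"
    and norm_eq_sqrt_cinner: "norm x = sqrt (Re (cinner x x))"

text \<open>A Hilbert space is a type of class \<open>{complex_inner, complete_space}\<close>.\<close>

definition is_lin_rel :: "('a::complex_vector \<times> 'b::complex_vector) set \<Rightarrow> bool" where
  "is_lin_rel T \<longleftrightarrow> (0, 0) \<in> T \<and>
     (\<forall>(f, g)\<in>T. \<forall>(f', g')\<in>T. (f + f', g + g') \<in> T) \<and>
     (\<forall>a. \<forall>(f, g)\<in>T. (scaleC a f, scaleC a g) \<in> T)"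

definition adj :: "('a::complex_inner \<times> 'b::complex_inner) set \<Rightarrow> ('b \<times> 'a) set" where
  "adj T = {(h, k). \<forall>(f, g)\<in>T. cinner g h = cinner f k}"

definition rel_comp :: "('b \<times> 'c) set \<Rightarrow> ('a \<times> 'b) set \<Rightarrow> ('a \<times> 'c) set" where
  "rel_comp R T = {(f, h). \<exists>g. (f, g) \<in> T \<and> (g, h) \<in> R}"

definition rel_shift :: "real \<Rightarrow> ('a::complex_vector \<times> 'a) set \<Rightarrow> ('a \<times> 'a) set" where
  "rel_shift c T = {(f, g + scaleC (complex_of_real c) f) | f g. (f, g) \<in> T}"

text \<open>\<open>c \<le> S\<close>: \<open>(\<phi>',\<phi>) \<ge> c \<parallel>\<phi>\<parallel>^2\<close> for all \<open>{\<phi>,\<phi>'} \<in> S\<close> (order on complex numbers: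
  real and greater or equal).\<close>
definition bounded_below_by :: "real \<Rightarrow> ('a::complex_inner \<times> 'a) set \<Rightarrow> bool" where
  "bounded_below_by c S \<longleftrightarrow>
     (\<forall>(\<phi>, \<phi>')\<in>S. complex_of_real (c * (norm \<phi>)\<^sup>2) \<le> cinner \<phi>' \<phi>)"

definition semibounded :: "('a::complex_inner \<times> 'a) set \<Rightarrow> bool" where
  "semibounded S \<longleftrightarrow> (\<exists>c. bounded_below_by c S)"

definition lower_bound :: "('a::complex_inner \<times> 'a) set \<Rightarrow> real \<Rightarrow> bool" where
  "lower_bound S \<gamma> \<longleftrightarrow>
     (\<forall>c. bounded_below_by c S \<longrightarrow> c \<le> \<gamma>) \<and>
     (\<forall>b. (\<forall>c. bounded_below_by c S \<longrightarrow> c \<le> b) \<longrightarrow> \<gamma> \<le> b)"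

definition selfadjoint :: "('a::complex_inner \<times> 'a) set \<Rightarrow> bool" where
  "selfadjoint H \<longleftrightarrow> is_lin_rel H \<and> adj H = H"

text \<open>\<open>Q\<close> is a representing map for \<open>t(S) - c\<close>: linear on \<open>dom S\<close> (its values off
  \<open>dom S\<close> are irrelevant) and \<open>t(S)[\<phi>,\<psi>] = (\<phi>',\<psi>) = c(\<phi>,\<psi>) + (Q\<phi>,Q\<psi>)\<close>.\<close>
definition representing_map ::
    "('a::complex_inner \<times> 'a) set \<Rightarrow> real \<Rightarrow> ('a \<Rightarrow> 'b::complex_inner) \<Rightarrow> bool" where
  "representing_map S c Q \<longleftrightarrow>
     (\<forall>x\<in>Domain S. \<forall>y\<in>Domain S. Q (x + y) = Q x + Q y) \<and>
     (\<forall>a. \<forall>x\<in>Domain S. Q (scaleC a x) = scaleC a (Q x)) \<and>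
     (\<forall>(\<phi>, \<phi>')\<in>S. \<forall>\<psi>\<in>Domain S.
        cinner \<phi>' \<psi> = complex_of_real c * cinner \<phi> \<psi> + cinner (Q \<phi>) (Q \<psi>))"

definition companion ::
    "('a::complex_inner \<times> 'a) set \<Rightarrow> real \<Rightarrow> ('a \<Rightarrow> 'b::complex_inner) \<Rightarrow> ('b \<times> 'a) set" where
  "companion S c Q = {(Q \<phi>, \<phi>' - scaleC (complex_of_real c) \<phi>) | \<phi> \<phi>'. (\<phi>, \<phi>') \<in> S}"

definition krein_ext ::
    "('a::complex_inner \<times> 'a) set \<Rightarrow> real \<Rightarrow> ('a \<Rightarrow> 'b::complex_inner) \<Rightarrow> ('a \<times> 'a) set" where
  "krein_ext S c Q =
     rel_shift c (rel_comp (adj (adj (companion S c Q))) (adj (companion S c Q)))"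

text \<open>\<open>t(H)[\<phi>] = (\<phi>',\<phi>)\<close>, \<open>{\<phi>,\<phi>'} \<in> H\<close> (independent of the choice of \<open>\<phi>'\<close>).\<close>
definition tq :: "('a::complex_inner \<times> 'a) set \<Rightarrow> 'a \<Rightarrow> complex" where
  "tq H \<phi> = cinner (SOME \<phi>'. (\<phi>, \<phi>') \<in> H) \<phi>"

definition form_approx :: "('a::{complex_inner} \<times> 'a) set \<Rightarrow> 'a \<Rightarrow> (nat \<Rightarrow> 'a) \<Rightarrow> bool" where
  "form_approx H f u \<longleftrightarrow> (\<forall>n. u n \<in> Domain H) \<and> u \<longlonglongrightarrow> f \<and>
     (\<forall>e>0. \<exists>N. \<forall>n\<ge>N. \<forall>m\<ge>N. cmod (tq H (u n - u m)) < e)"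

text \<open>Domain of the closure \<open>t_H\<close> of \<open>t(H)\<close>.\<close>
definition form_dom :: "('a::complex_inner \<times> 'a) set \<Rightarrow> 'a set" where
  "form_dom H = {f. \<exists>u. form_approx H f u}"

definition form_val :: "('a::complex_inner \<times> 'a) set \<Rightarrow> 'a \<Rightarrow> real" where
  "form_val H f = Re (lim (\<lambda>n. tq H ((SOME u. form_approx H f u) n)))"

definition form_le :: "('a::complex_inner \<times> 'a) set \<Rightarrow> ('a \<times> 'a) set \<Rightarrow> bool" where
  "form_le H K \<longleftrightarrow> form_dom K \<subseteq> form_dom H \<and> (\<forall>f\<in>form_dom K. form_val H f \<le> form_val K f)"

end

theory Submission
  imports Defs
begin

text \<open>Write \<open>J = J\<^sub>c\<close> and \<open>T = J*\<close>, so that \<open>S\<^sub>K\<^sub>,\<^sub>c = c + T*T\<close> and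
  \<open>t\<^sub>S\<^sub>K[f] = \<parallel>k\<parallel>\<^sup>2 + c \<parallel>f\<parallel>\<^sup>2\<close>, where \<open>k\<close> is the unique element of \<open>T f\<close> orthogonal to
  \<open>mul T = (dom J)\<^sup>\<bottom>\<close>; in particular \<open>t\<^sub>S\<^sub>K \<ge> c\<close>, which gives one direction.
  Conversely, if \<open>c \<le> H\<close> and \<open>(u, u') \<in> H\<close>, then by the Cauchy-Schwarz inequality for the
  nonnegative form \<open>t(H) - c\<close> the functional \<open>Q \<phi> \<mapsto> (\<phi>' - c \<phi>, u)\<close> is bounded by
  \<open>(t(H)[u] - c \<parallel>u\<parallel>\<^sup>2)\<^sup>1\<^sup>/\<^sup>2\<close>, so its Riesz representative \<open>k \<in> T u\<close> satisfies
  \<open>\<parallel>k\<parallel>\<^sup>2 + c \<parallel>u\<parallel>\<^sup>2 \<le> t(H)[u]\<close>.  Along a \<open>t(H)\<close>-approximating sequence for \<open>f \<in> dom t\<^sub>H\<close> these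
  representatives converge, and density of \<open>dom T*T\<close> in \<open>dom T\<close> for the graph norm
  turns the limit into \<open>f \<in> dom t\<^sub>S\<^sub>K\<close> with \<open>t\<^sub>S\<^sub>K[f] \<le> t\<^sub>H[f]\<close>.\<close>

section \<open>Complex inner product spaces\<close>

context complex_vector begin
lemma scaleC_zero_right[simp]: "scaleC a 0 = 0"
proof -
  have "scaleC a 0 + scaleC a 0 = scaleC a (0 + 0)" by (rule scaleC_add_right[symmetric])
  hence "scaleC a 0 + scaleC a 0 = scaleC a 0" by (simp only: add_0)
  thus ?thesis by (simp only: add_cancel_left_right)
qed
lemma scaleC_zero_left[simp]: "scaleC 0 x = 0"
proof -
  have "scaleC 0 x + scaleC 0 x = scaleC (0 + 0) x" by (rule scaleC_add_left[symmetric])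
  also have "scaleC (0 + 0) x = scaleC 0 x" by simp
  finally have "scaleC 0 x + scaleC 0 x = scaleC 0 x" .
  thus ?thesis by (simp only: add_cancel_left_right)
qed
lemma scaleC_minus_right: "scaleC a (- x) = - scaleC a x"
proof -
  have "scaleC a x + scaleC a (- x) = scaleC a (x + - x)" by (rule scaleC_add_right[symmetric])
  hence "scaleC a x + scaleC a (- x) = 0" by (simp only: add.right_inverse scaleC_zero_right)
  thus ?thesis by (rule minus_unique[symmetric])
qed
lemma scaleC_diff_right: "scaleC a (x - y) = scaleC a x - scaleC a y"
  by (simp only: diff_conv_add_uminus scaleC_add_right scaleC_minus_right)
lemma scaleC_minus_left: "scaleC (- a) x = - scaleC a x"
proof -
  have "scaleC a x + scaleC (- a) x = scaleC (a + - a) x" by (rule scaleC_add_left[symmetric])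
  also have "\<dots> = 0" by simp
  finally show ?thesis by (rule minus_unique[symmetric])
qed
end

lemma cinner_zero_left[simp]: "cinner 0 (y::'a::complex_inner) = 0"
proof -
  have "cinner 0 y + cinner 0 y = cinner (0 + 0) y" by (rule cinner_add_left[symmetric])
  hence "cinner 0 y + cinner 0 y = cinner 0 y" by (simp only: add_0_left)
  thus ?thesis by (simp only: add_cancel_left_right)
qed
lemma cinner_zero_right[simp]: "cinner (x::'a::complex_inner) 0 = 0"
  by (subst cinner_commute) simp
lemma cinner_add_right: fixes x :: "'a::complex_inner" shows "cinner x (y + z) = cinner x y + cinner x z"
proof -
  have "cinner x (y + z) = cnj (cinner (y + z) x)" by (rule cinner_commute)
  also have "\<dots> = cnj (cinner y x) + cnj (cinner z x)" by (simp only: cinner_add_left complex_cnj_add)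
  also have "\<dots> = cinner x y + cinner x z" by (simp only: cinner_commute[of x y] cinner_commute[of x z])
  finally show ?thesis .
qed
lemma cinner_scaleC_right: fixes x :: "'a::complex_inner" shows "cinner x (scaleC r y) = cnj r * cinner x y"
proof -
  have "cinner x (scaleC r y) = cnj (cinner (scaleC r y) x)" by (rule cinner_commute)
  also have "\<dots> = cnj r * cnj (cinner y x)" by (simp only: cinner_scaleC_left complex_cnj_mult)
  also have "\<dots> = cnj r * cinner x y" by (simp only: cinner_commute[of x y])
  finally show ?thesis .
qed
lemma cinner_minus_left: fixes x :: "'a::complex_inner" shows "cinner (- x) y = - cinner x y"
proof -
  have "cinner x y + cinner (- x) y = cinner (x + - x) y" by (rule cinner_add_left[symmetric])
  also have "\<dots> = 0" by simp
  finally show ?thesis by (rule minus_unique[symmetric])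
qed
lemma cinner_minus_right: fixes x :: "'a::complex_inner" shows "cinner x (- y) = - cinner x y"
proof -
  have "cinner x y + cinner x (- y) = cinner x (y + - y)" by (rule cinner_add_right[symmetric])
  also have "\<dots> = 0" by simp
  finally show ?thesis by (rule minus_unique[symmetric])
qed
lemma cinner_diff_left: fixes x :: "'a::complex_inner" shows "cinner (x - y) z = cinner x z - cinner y z"
  by (simp only: diff_conv_add_uminus cinner_add_left cinner_minus_left)
lemma cinner_diff_right: fixes x :: "'a::complex_inner" shows "cinner x (y - z) = cinner x y - cinner x z"
  by (simp only: diff_conv_add_uminus cinner_add_right cinner_minus_right)
lemma Im_cinner_self: fixes x :: "'a::complex_inner" shows "Im (cinner x x) = 0"
proof -
  have "cinner x x = cnj (cinner x x)" by (rule cinner_commute)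
  hence "Im (cinner x x) = Im (cnj (cinner x x))" by (rule arg_cong)
  thus ?thesis by simp
qed
lemma Re_cinner_self: fixes x :: "'a::complex_inner" shows "Re (cinner x x) = (norm x)\<^sup>2"
  using cinner_ge_zero[of x] by (simp add: norm_eq_sqrt_cinner)
lemma cinner_self_norm: fixes x :: "'a::complex_inner" shows "cinner x x = complex_of_real ((norm x)\<^sup>2)"
  using Re_cinner_self[of x] Im_cinner_self[of x] by (simp add: complex_eq_iff)

lemma power2_norm_add_scaleC:
  fixes x y :: "'a::complex_inner"
  shows "(norm (x + scaleC t y))\<^sup>2 = (norm x)\<^sup>2 + 2 * Re (t * cinner y x) + (cmod t)\<^sup>2 * (norm y)\<^sup>2"
proof -
  have "cinner (x + scaleC t y) (x + scaleC t y) =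
        cinner x x + (t * cinner y x + cnj (t * cinner y x)) + t * cnj t * cinner y y"
    by (simp add: cinner_add_left cinner_add_right cinner_scaleC_left cinner_scaleC_right
        cinner_commute[of x y] algebra_simps)
  hence "Re (cinner (x + scaleC t y) (x + scaleC t y)) =
        Re (cinner x x) + 2 * Re (t * cinner y x) + (cmod t)\<^sup>2 * Re (cinner y y)"
    by (simp add: complex_mult_cnj cmod_def power2_eq_square)
  thus ?thesis by (simp add: Re_cinner_self)
qed

lemma cmod_sq_le_of_quadratic_nonneg:
  fixes a b :: real and z :: complex
  assumes "a \<ge> 0" "b \<ge> 0" and H: "\<And>t. 0 \<le> a + 2 * Re (t * z) + (cmod t)\<^sup>2 * b"
  shows "(cmod z)\<^sup>2 \<le> a * b"
proof (cases "b > 0")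
  case True
  define t where "t = - cnj z / complex_of_real b"
  have zz: "cnj z * z = complex_of_real ((cmod z)\<^sup>2)" by (subst complex_norm_square) (rule mult.commute)
  have tz: "t * z = - complex_of_real ((cmod z)\<^sup>2 / b)"
    unfolding t_def by (simp only: mult_minus_left times_divide_eq_left zz of_real_divide minus_divide_left)
  have ct: "(cmod t)\<^sup>2 = (cmod z)\<^sup>2 / b\<^sup>2"
    unfolding t_def using True by (simp add: norm_divide power_divide)
  have "0 \<le> a + 2 * (- ((cmod z)\<^sup>2 / b)) + (cmod z)\<^sup>2 / b\<^sup>2 * b"
    using H[of t] by (simp add: tz ct)
  also have "(cmod z)\<^sup>2 / b\<^sup>2 * b = (cmod z)\<^sup>2 / b" using True by (simp add: power2_eq_square)
  finally have "0 \<le> a - (cmod z)\<^sup>2 / b" by simp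
  hence "(cmod z)\<^sup>2 / b \<le> a" by simp
  thus ?thesis using True by (simp add: divide_le_eq mult.commute)
next
  case False
  hence b0: "b = 0" using assms(2) by simp
  show ?thesis
  proof (rule ccontr)
    assume "\<not> ?thesis"
    hence zp: "(cmod z)\<^sup>2 > 0" using b0 by simp
    define s where "s = (a + 1) / (2 * (cmod z)\<^sup>2)"
    define t where "t = - complex_of_real s * cnj z"
    have zz: "cnj z * z = complex_of_real ((cmod z)\<^sup>2)" by (subst complex_norm_square) (rule mult.commute)
    have tz: "t * z = - complex_of_real (s * (cmod z)\<^sup>2)"
      unfolding t_def by (simp only: mult_minus_left mult.assoc zz of_real_mult)
    have "0 \<le> a + 2 * (- (s * (cmod z)\<^sup>2))" using H[of t] b0 by (simp add: tz)
    also have "s * (cmod z)\<^sup>2 = (a + 1) / 2" unfolding s_def using zp by simp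
    finally show False by simp
  qed
qed

lemma cmod_cinner_le:
  fixes x y :: "'a::complex_inner"
  shows "cmod (cinner x y) \<le> norm x * norm y"
proof -
  have "(cmod (cinner y x))\<^sup>2 \<le> (norm x)\<^sup>2 * (norm y)\<^sup>2"
  proof (rule cmod_sq_le_of_quadratic_nonneg)
    fix t
    have "0 \<le> (norm (x + scaleC t y))\<^sup>2" by simp
    thus "0 \<le> (norm x)\<^sup>2 + 2 * Re (t * cinner y x) + (cmod t)\<^sup>2 * (norm y)\<^sup>2"
      by (simp only: power2_norm_add_scaleC)
  qed simp_all
  hence "(cmod (cinner y x))\<^sup>2 \<le> (norm x * norm y)\<^sup>2" by (simp add: power_mult_distrib)
  hence "cmod (cinner y x) \<le> norm x * norm y"
    by (rule power2_le_imp_le) simp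
  moreover have "cmod (cinner x y) = cmod (cinner y x)"
    by (subst cinner_commute) simp
  ultimately show ?thesis by simp
qed

lemma bounded_bilinear_cinner: "bounded_bilinear (cinner :: 'a::complex_inner \<Rightarrow> 'a \<Rightarrow> complex)"
proof
  fix a a' b b' :: 'a and r :: real
  show "cinner (a + a') b = cinner a b + cinner a' b" by (rule cinner_add_left)
  show "cinner a (b + b') = cinner a b + cinner a b'" by (rule cinner_add_right)
  show "cinner (r *\<^sub>R a) b = r *\<^sub>R cinner a b"
    by (simp add: scaleR_scaleC cinner_scaleC_left scaleR_conv_of_real)
  show "cinner a (r *\<^sub>R b) = r *\<^sub>R cinner a b"
    by (simp add: scaleR_scaleC cinner_scaleC_right scaleR_conv_of_real)
next
  show "\<exists>K. \<forall>a b. norm (cinner (a::'a) b) \<le> norm a * norm b * K"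
    by (rule exI[of _ 1]) (simp add: cmod_cinner_le)
qed

lemmas tendsto_cinner = bounded_bilinear.tendsto[OF bounded_bilinear_cinner]

text \<open>Graphs of linear relations are subspaces of the product space.\<close>

instantiation prod :: (complex_vector, complex_vector) complex_vector
begin
definition scaleC_prod_def: "scaleC a x = (scaleC a (fst x), scaleC a (snd x))"
instance
proof
  fix a b :: complex and x y :: "'a \<times> 'b" and r :: real
  show "scaleC a (x + y) = scaleC a x + scaleC a y"
    by (simp add: scaleC_prod_def scaleC_add_right)
  show "scaleC (a + b) x = scaleC a x + scaleC b x"
    by (simp add: scaleC_prod_def scaleC_add_left)
  show "scaleC a (scaleC b x) = scaleC (a * b) x"
    by (simp add: scaleC_prod_def scaleC_scaleC)
  show "scaleC 1 x = x"
    by (simp add: scaleC_prod_def scaleC_one)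
  show "r *\<^sub>R x = scaleC (complex_of_real r) x"
    by (simp add: scaleC_prod_def scaleR_prod_def scaleR_scaleC)
qed
end

lemma scaleC_Pair[simp]: "scaleC a (x, y) = (scaleC a x, scaleC a y)"
  by (simp add: scaleC_prod_def)

instantiation prod :: (complex_inner, complex_inner) complex_inner
begin
definition cinner_prod_def: "cinner x y = cinner (fst x) (fst y) + cinner (snd x) (snd y)"
instance
proof
  fix x y z :: "'a \<times> 'b" and r :: complex
  show "cinner x y = cnj (cinner y x)"
    by (simp add: cinner_prod_def cinner_commute[of "fst x"] cinner_commute[of "snd x"])
  show "cinner (x + y) z = cinner x z + cinner y z"
    by (simp add: cinner_prod_def cinner_add_left)
  show "cinner (scaleC r x) y = r * cinner x y"
    by (simp add: cinner_prod_def scaleC_prod_def cinner_scaleC_left algebra_simps)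
  show "0 \<le> Re (cinner x x)"
    by (simp add: cinner_prod_def Re_cinner_self)
  show "(cinner x x = 0) = (x = 0)"
  proof
    assume "cinner x x = 0"
    hence "Re (cinner x x) = 0" by simp
    hence "(norm (fst x))\<^sup>2 + (norm (snd x))\<^sup>2 = 0" by (simp add: cinner_prod_def Re_cinner_self)
    hence "fst x = 0 \<and> snd x = 0"
      by (metis add_nonneg_eq_0_iff norm_eq_zero power_eq_0_iff zero_le_power2)
    thus "x = 0" by (simp add: prod_eq_iff)
  qed (simp add: cinner_prod_def)
  show "norm x = sqrt (Re (cinner x x))"
    by (simp add: cinner_prod_def Re_cinner_self norm_prod_def)
qed
end

lemma cinner_Pair[simp]: "cinner (a, b) (c, d) = cinner a c + cinner b d"
  by (simp add: cinner_prod_def)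

lemma Cauchy_norm_imp_convergent:
  fixes x :: "nat \<Rightarrow> 'x::{real_normed_vector, complete_space}"
  assumes "\<And>e. e > 0 \<Longrightarrow> \<exists>N. \<forall>n\<ge>N. \<forall>m\<ge>N. norm (x n - x m) < e"
  shows "\<exists>k. x \<longlonglongrightarrow> k"
proof -
  have "Cauchy x" unfolding Cauchy_def dist_norm using assms by blast
  thus ?thesis by (simp add: Cauchy_convergent_iff convergent_def)
qed

lemma convergent_imp_Cauchy_norm:
  fixes w :: "nat \<Rightarrow> 'x::real_normed_vector"
  assumes "w \<longlonglongrightarrow> f" "e > 0"
  shows "\<exists>N. \<forall>n\<ge>N. \<forall>m\<ge>N. norm (w n - w m) < e"
  using LIMSEQ_imp_Cauchy[OF assms(1)] assms(2) unfolding Cauchy_iff by blast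

lemma parallelogram_law:
  fixes x y :: "'a::complex_inner"
  shows "(norm (x + y))\<^sup>2 + (norm (x - y))\<^sup>2 = 2 * (norm x)\<^sup>2 + 2 * (norm y)\<^sup>2"
proof -
  have "scaleC (-1) y = - y" by (simp add: scaleC_minus_left scaleC_one)
  thus ?thesis
    using power2_norm_add_scaleC[of x 1 y] power2_norm_add_scaleC[of x "-1" y] by (simp add: scaleC_one)
qed

section \<open>Riesz representation on a non-closed subspace\<close>

text \<open>A bounded functional is given by its graph \<open>R\<close>; its representing vector is the limit of a
  minimizing sequence for \<open>\<parallel>q\<parallel>\<^sup>2 - 2 Re z\<close> on \<open>R\<close>.\<close>

lemma minimizing_sequence_Cauchy:
  fixes R :: "('x::complex_inner \<times> complex) set"
  assumes Radd: "\<And>q z q' z'. (q, z) \<in> R \<Longrightarrow> (q', z') \<in> R \<Longrightarrow> (q + q', z + z') \<in> R"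
    and Rsc: "\<And>a q z. (q, z) \<in> R \<Longrightarrow> (scaleC a q, a * z) \<in> R"
    and lower: "\<And>a b. (a, b) \<in> R \<Longrightarrow> d \<le> (norm a)\<^sup>2 - 2 * Re b"
    and qz: "\<And>n. (q n, z n) \<in> R"
    and almost_min: "\<And>n. (norm (q n))\<^sup>2 - 2 * Re (z n) < d + 1 / real (Suc n)"
  shows "Cauchy q"
proof -
  have diff: "(norm (q n - q m))\<^sup>2 \<le> 2 * (1 / real (Suc n) + 1 / real (Suc m))" for n m
  proof -
    have "(scaleC (1/2) (q n + q m), (1/2) * (z n + z m)) \<in> R"
      by (rule Rsc, rule Radd, rule qz, rule qz)
    from lower[OF this] have "d \<le> (norm (scaleC (1/2) (q n + q m)))\<^sup>2 - 2 * Re ((1/2) * (z n + z m))" .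
    moreover have "scaleC (1/2) (q n + q m) = (1/2::real) *\<^sub>R (q n + q m)"
      by (simp add: scaleR_scaleC)
    hence "(norm (scaleC (1/2) (q n + q m)))\<^sup>2 = (norm (q n + q m))\<^sup>2 / 4"
      by (simp add: power2_eq_square)
    moreover have "2 * Re ((1/2) * (z n + z m)) = Re (z n) + Re (z m)" by simp
    ultimately have "d \<le> (norm (q n + q m))\<^sup>2 / 4 - (Re (z n) + Re (z m))" by (simp only:)
    with almost_min[of n] almost_min[of m] parallelogram_law[of "q n" "q m"] show ?thesis
      unfolding distrib_left by linarith
  qed
  show ?thesis unfolding Cauchy_def dist_norm
  proof (intro allI impI)
    fix e :: real assume e: "e > 0"
    obtain N :: nat where "4 / e\<^sup>2 < real N" using reals_Archimedean2 by blast
    hence N: "4 / e\<^sup>2 < real (Suc N)" by simp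
    have "norm (q n - q m) < e" if "n \<ge> N" "m \<ge> N" for n m
    proof -
      have "1 / real (Suc n) \<le> 1 / real (Suc N)" "1 / real (Suc m) \<le> 1 / real (Suc N)"
        using that by (simp_all add: frac_le)
      with diff[of n m] have "(norm (q n - q m))\<^sup>2 \<le> 4 / real (Suc N)" by simp
      also have "\<dots> < e\<^sup>2" using N e by (simp add: divide_less_eq mult.commute)
      finally show ?thesis using e by (simp add: power_less_imp_less_base)
    qed
    thus "\<exists>N. \<forall>n\<ge>N. \<forall>m\<ge>N. norm (q n - q m) < e" by blast
  qed
qed

lemma minimizing_sequence_limit_represents:
  fixes R :: "('x::complex_inner \<times> complex) set"
  assumes Radd: "\<And>q z q' z'. (q, z) \<in> R \<Longrightarrow> (q', z') \<in> R \<Longrightarrow> (q + q', z + z') \<in> R"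
    and Rsc: "\<And>a q z. (q, z) \<in> R \<Longrightarrow> (scaleC a q, a * z) \<in> R"
    and lower: "\<And>a b. (a, b) \<in> R \<Longrightarrow> d \<le> (norm a)\<^sup>2 - 2 * Re b"
    and qz: "\<And>n. (q n, z n) \<in> R"
    and almost_min: "\<And>n. (norm (q n))\<^sup>2 - 2 * Re (z n) < d + 1 / real (Suc n)"
    and qk: "q \<longlonglongrightarrow> k" and yw: "(y, w) \<in> R"
  shows "cinner y k = w"
proof -
  have "(cmod (cinner y k - w))\<^sup>2 \<le> 0 * (norm y)\<^sup>2"
  proof (rule cmod_sq_le_of_quadratic_nonneg)
    fix t :: complex
    define g where "g n = 2 * Re (t * (cinner y (q n) - w)) + (cmod t)\<^sup>2 * (norm y)\<^sup>2 + 1 / real (Suc n)"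
      for n
    have nonneg: "0 \<le> g n" for n
    proof -
      have "d \<le> (norm (q n + scaleC t y))\<^sup>2 - 2 * Re (z n + t * w)"
        by (rule lower[OF Radd[OF qz Rsc[OF yw]]])
      with almost_min[of n] show ?thesis
        unfolding g_def power2_norm_add_scaleC by (simp add: right_diff_distrib)
    qed
    have "g \<longlonglongrightarrow> 2 * Re (t * (cinner y k - w)) + (cmod t)\<^sup>2 * (norm y)\<^sup>2 + 0"
      unfolding g_def using LIMSEQ_inverse_real_of_nat
      by (intro tendsto_add tendsto_mult tendsto_Re tendsto_diff tendsto_const tendsto_cinner qk)
        (simp add: inverse_eq_divide)
    hence "0 \<le> 2 * Re (t * (cinner y k - w)) + (cmod t)\<^sup>2 * (norm y)\<^sup>2 + 0"
      by (rule LIMSEQ_le_const) (use nonneg in blast)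
    thus "0 \<le> 0 + 2 * Re (t * (cinner y k - w)) + (cmod t)\<^sup>2 * (norm y)\<^sup>2" by simp
  qed simp_all
  hence "cmod (cinner y k - w) = 0" by (simp only: mult_zero_left power2_less_eq_zero_iff norm_eq_zero)
  thus ?thesis by simp
qed

lemma bounded_functional_representation:
  fixes R :: "('x::{complex_inner, complete_space} \<times> complex) set" and C :: real
  assumes R0: "(0, 0) \<in> R"
    and Radd: "\<And>q z q' z'. (q, z) \<in> R \<Longrightarrow> (q', z') \<in> R \<Longrightarrow> (q + q', z + z') \<in> R"
    and Rsc: "\<And>a q z. (q, z) \<in> R \<Longrightarrow> (scaleC a q, a * z) \<in> R"
    and C0: "C \<ge> 0" and bnd: "\<And>q z. (q, z) \<in> R \<Longrightarrow> cmod z \<le> C * norm q"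
  shows "\<exists>k. (\<exists>s. (\<forall>n. s n \<in> Domain R) \<and> s \<longlonglongrightarrow> k) \<and> (\<forall>(q, z)\<in>R. cinner q k = z) \<and> norm k \<le> C"
proof -
  define F where "F = (\<lambda>(q :: 'x, z). (norm q)\<^sup>2 - 2 * Re z)"
  have "F p \<ge> - C\<^sup>2" if "p \<in> R" for p
  proof -
    obtain q z where p: "p = (q, z)" by force
    have "Re z \<le> C * norm q" using complex_Re_le_cmod[of z] bnd that p by force
    moreover have "0 \<le> (norm q - C)\<^sup>2" by simp
    ultimately show ?thesis unfolding F_def p by (simp add: power2_diff algebra_simps)
  qed
  hence bdd: "bdd_below (F ` R)" by (auto intro!: bdd_belowI[of _ "- C\<^sup>2"])
  define d where "d = Inf (F ` R)"
  have lower: "d \<le> (norm a)\<^sup>2 - 2 * Re b" if "(a, b) \<in> R" for a b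
    using cInf_lower[OF imageI[OF that] bdd] unfolding d_def F_def by simp
  have "\<exists>p\<in>R. F p < d + 1 / real (Suc n)" for n
    using cInf_lessD[of "F ` R" "d + 1 / real (Suc n)"] R0 unfolding d_def by auto
  then obtain p where pR: "\<And>n. p n \<in> R" and pF: "\<And>n. F (p n) < d + 1 / real (Suc n)"
    by metis
  define q where "q n = fst (p n)" for n
  define z where "z n = snd (p n)" for n
  have qz: "(q n, z n) \<in> R" for n using pR[of n] by (simp add: q_def z_def)
  have almost_min: "(norm (q n))\<^sup>2 - 2 * Re (z n) < d + 1 / real (Suc n)" for n
    using pF[of n] by (simp add: F_def q_def z_def case_prod_beta)
  note min_seq = Radd Rsc lower qz almost_min
  obtain k where qk: "q \<longlonglongrightarrow> k"
    using minimizing_sequence_Cauchy[OF min_seq] by (auto simp: Cauchy_convergent_iff convergent_def)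
  have repr: "cinner y k = w" if "(y, w) \<in> R" for y w
    by (rule minimizing_sequence_limit_represents[OF min_seq qk that])
  have "z = (\<lambda>n. cinner (q n) k)" using repr[OF qz] by (simp add: fun_eq_iff)
  hence "(\<lambda>n. cmod (z n)) \<longlonglongrightarrow> cmod (cinner k k)"
    by (simp add: tendsto_norm tendsto_cinner[OF qk tendsto_const])
  moreover have "\<forall>\<^sub>F n in sequentially. cmod (z n) \<le> C * norm (q n)"
    using bnd[OF qz] by (auto intro: always_eventually)
  ultimately have "cmod (cinner k k) \<le> C * norm k"
    by (intro tendsto_le[OF sequentially_bot, of "\<lambda>n. C * norm (q n)"] tendsto_intros qk)
  hence "norm k * norm k \<le> C * norm k"
    by (simp only: cinner_self_norm norm_of_real abs_power2 abs_norm_cancel power2_eq_square)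
  hence "norm k \<le> C"
    using C0 by (cases "norm k = 0") (auto simp: mult_le_cancel_right)
  moreover have "\<forall>n. q n \<in> Domain R" using qz by blast
  ultimately show ?thesis using qk repr by blast
qed

lemma projection_onto_closure:
  fixes v :: "'x::{complex_inner, complete_space}"
  assumes "0 \<in> D" and "\<And>p p'. p \<in> D \<Longrightarrow> p' \<in> D \<Longrightarrow> p + p' \<in> D"
    and "\<And>a p. p \<in> D \<Longrightarrow> scaleC a p \<in> D"
  shows "\<exists>k. (\<exists>s. (\<forall>n. s n \<in> D) \<and> s \<longlonglongrightarrow> k) \<and> (\<forall>p\<in>D. cinner p k = cinner p v)"
proof -
  define R where "R = {(p, cinner p v) | p. p \<in> D}"
  have "\<exists>k. (\<exists>s. (\<forall>n. s n \<in> Domain R) \<and> s \<longlonglongrightarrow> k) \<and> (\<forall>(q, z)\<in>R. cinner q k = z) \<and> norm k \<le> norm v"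
    by (rule bounded_functional_representation)
      (use assms in \<open>auto simp: R_def cinner_add_left cinner_scaleC_left mult.commute[of "norm v"]
        intro!: cmod_cinner_le exI[of _ 0]\<close>)
  moreover have "Domain R = D" unfolding R_def by auto
  ultimately show ?thesis unfolding R_def by auto
qed

section \<open>Adjoints of linear relations\<close>

lemma mem_adj_iff: "(h, k) \<in> adj R \<longleftrightarrow> (\<forall>f g. (f, g) \<in> R \<longrightarrow> cinner g h = cinner f k)"
  by (auto simp: adj_def)

lemma adjD: "(h, k) \<in> adj R \<Longrightarrow> (f, g) \<in> R \<Longrightarrow> cinner g h = cinner f k"
  by (auto simp: adj_def)

lemma adj_zero: "(0, 0) \<in> adj R"
  by (simp add: mem_adj_iff)

lemma adj_add: "(h, k) \<in> adj R \<Longrightarrow> (h', k') \<in> adj R \<Longrightarrow> (h + h', k + k') \<in> adj R"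
  by (simp add: mem_adj_iff cinner_add_right)

lemma adj_scale: "(h, k) \<in> adj R \<Longrightarrow> (scaleC a h, scaleC a k) \<in> adj R"
  by (simp add: mem_adj_iff cinner_scaleC_right)

lemma adj_minus: "(h, k) \<in> adj R \<Longrightarrow> (- h, - k) \<in> adj R"
  by (simp add: mem_adj_iff cinner_minus_right)

lemma adj_diff: "(h, k) \<in> adj R \<Longrightarrow> (h', k') \<in> adj R \<Longrightarrow> (h - h', k - k') \<in> adj R"
  by (simp add: mem_adj_iff cinner_diff_right)

lemma adj_closed_seq:
  assumes "\<And>n. (h n, k n) \<in> adj R" "h \<longlonglongrightarrow> a" "k \<longlonglongrightarrow> b"
  shows "(a, b) \<in> adj R"
proof (unfold mem_adj_iff, intro allI impI)
  fix f g assume fg: "(f, g) \<in> R"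
  have l1: "(\<lambda>n. cinner g (h n)) \<longlonglongrightarrow> cinner g a" by (rule tendsto_cinner[OF tendsto_const assms(2)])
  have l2: "(\<lambda>n. cinner f (k n)) \<longlonglongrightarrow> cinner f b" by (rule tendsto_cinner[OF tendsto_const assms(3)])
  have "(\<lambda>n. cinner g (h n)) = (\<lambda>n. cinner f (k n))" using adjD[OF assms(1) fg] by (simp add: fun_eq_iff)
  with l1 l2 show "cinner g a = cinner f b" using LIMSEQ_unique by metis
qed

lemma adj_closed_seq_pair:
  assumes "\<And>n. s n \<in> adj R" "s \<longlonglongrightarrow> p"
  shows "p \<in> adj R"
proof -
  have "(fst p, snd p) \<in> adj R"
    by (rule adj_closed_seq[of "\<lambda>n. fst (s n)" "\<lambda>n. snd (s n)"])
      (use assms in \<open>auto intro: tendsto_fst tendsto_snd\<close>)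
  thus ?thesis by simp
qed

lemma mul_orthogonal_dom_adj: "(0, m) \<in> T \<Longrightarrow> (\<kappa>, \<gamma>) \<in> adj T \<Longrightarrow> cinner m \<kappa> = 0"
  using adjD[of \<kappa> \<gamma> T 0 m] by simp

lemma mem_shift_comp_adj:
  "(y, g) \<in> rel_shift c (rel_comp (adj T) T) \<longleftrightarrow>
     (\<exists>k g0. (y, k) \<in> T \<and> (k, g0) \<in> adj T \<and> g = g0 + scaleC (complex_of_real c) y)"
  by (auto simp: rel_shift_def rel_comp_def)

lemma tq_shift_comp_adj:
  fixes T :: "('a::complex_inner \<times> 'b::complex_inner) set"
  assumes "(y, k) \<in> T" "(k, g0) \<in> adj T"
  shows "tq (rel_shift c (rel_comp (adj T) T)) y = cinner k k + complex_of_real c * cinner y y"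
proof -
  let ?K = "rel_shift c (rel_comp (adj T) T)"
  have ex: "\<exists>g. (y, g) \<in> ?K" using assms by (auto simp: mem_shift_comp_adj)
  define g where "g = (SOME g. (y, g) \<in> ?K)"
  have "(y, g) \<in> ?K" unfolding g_def using someI_ex[OF ex] .
  then obtain k2 g2 where k2: "(y, k2) \<in> T" "(k2, g2) \<in> adj T" and g: "g = g2 + scaleC (complex_of_real c) y"
    by (auto simp: mem_shift_comp_adj)
  have "cinner k k2 = cinner y g2" using adjD[OF k2(2) assms(1)] .
  hence a: "cinner g2 y = cinner k2 k" by (metis cinner_commute)
  have b: "cinner k2 k = cinner y g0" using adjD[OF assms(2) k2(1)] .
  have c: "cinner k k = cinner y g0" using adjD[OF assms(2) assms(1)] .
  have "tq ?K y = cinner g y" unfolding tq_def g_def ..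
  also have "\<dots> = cinner g2 y + complex_of_real c * cinner y y"
    by (simp add: g cinner_add_left cinner_scaleC_left)
  finally show ?thesis using a b c by simp
qed

lemma adj_pair_add: "p \<in> adj R \<Longrightarrow> p' \<in> adj R \<Longrightarrow> p + p' \<in> adj R"
  using adj_add[of "fst p" "snd p" R "fst p'" "snd p'"] by (cases p, cases p') simp
lemma adj_pair_scale: "p \<in> adj R \<Longrightarrow> scaleC a p \<in> adj R"
  using adj_scale[of "fst p" "snd p" R a] by (cases p) simp
lemma adj_pair_zero: "(0::'a::complex_inner \<times> 'b::complex_inner) \<in> adj R"
  using adj_zero[of R] by (simp add: zero_prod_def)

lemma adj_graph_decomposition:
  fixes J :: "('b::{complex_inner,complete_space} \<times> 'a::{complex_inner,complete_space}) set"
  defines "T \<equiv> adj J"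
  shows "\<exists>y k. (y, k) \<in> T \<and> (k, x - y) \<in> adj T"
proof -
  obtain p where p: "\<exists>s. (\<forall>n. s n \<in> T) \<and> s \<longlonglongrightarrow> p" and orth: "\<forall>q\<in>T. cinner q p = cinner q (x, 0)"
    using projection_onto_closure[of T "(x, 0::'b)"] adj_pair_zero[of J] adj_pair_add[of _ J]
      adj_pair_scale[of _ J] unfolding T_def by blast
  obtain y k where yk: "p = (y, k)" by fastforce
  have "(y, k) \<in> T" using p adj_closed_seq_pair unfolding yk T_def by blast
  moreover have "(k, x - y) \<in> adj T"
  proof (unfold mem_adj_iff, intro allI impI)
    fix a b assume "(a, b) \<in> T"
    with orth have "cinner a y + cinner b k = cinner a x" unfolding yk by fastforce
    thus "cinner b k = cinner a (x - y)" by (metis add_diff_cancel_left' cinner_diff_right)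
  qed
  ultimately show ?thesis by blast
qed

lemma adj_orthogonal_dom_comp_imp_zero:
  fixes J :: "('b::{complex_inner,complete_space} \<times> 'a::{complex_inner,complete_space}) set"
  defines "T \<equiv> adj J"
  assumes ab: "(a, b) \<in> T"
    and orth: "\<And>y k g. (y, k) \<in> T \<Longrightarrow> (k, g) \<in> adj T \<Longrightarrow> cinner y a + cinner k b = 0"
  shows "a = 0"
proof -
  obtain y k where yk: "(y, k) \<in> T" "(k, a - y) \<in> adj T"
    using adj_graph_decomposition[of J a] unfolding T_def by blast
  have "cinner b k = cinner a (a - y)" by (rule adjD[OF yk(2) ab])
  hence "cnj (cinner b k) = cnj (cinner a (a - y))" by simp
  hence "cinner k b = cinner (a - y) a" by (simp only: cinner_commute[of k b] cinner_commute[of "a - y" a])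
  with orth[OF yk] have "cinner a a = 0" by (simp add: cinner_diff_left)
  thus ?thesis by (simp add: cinner_eq_zero_iff)
qed

lemma projection_onto_closure_graph_dom_comp_adj:
  fixes J :: "('b::{complex_inner,complete_space} \<times> 'a::{complex_inner,complete_space}) set"
  defines "T \<equiv> adj J"
  defines "D \<equiv> {p. p \<in> T \<and> snd p \<in> Domain (adj T)}"
  shows "\<exists>p0. (\<exists>s. (\<forall>n. s n \<in> D) \<and> s \<longlonglongrightarrow> p0) \<and> (\<forall>p\<in>D. cinner p p0 = cinner p v)"
proof (rule projection_onto_closure)
  show "0 \<in> D" unfolding D_def T_def using adj_pair_zero[of J] adj_zero[of "adj J"]
    by (simp add: zero_prod_def Domain.DomainI)
  show "p + p' \<in> D" if "p \<in> D" "p' \<in> D" for p p'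
  proof -
    from that obtain g g' where "(snd p, g) \<in> adj T" "(snd p', g') \<in> adj T" unfolding D_def by auto
    hence "(snd (p + p'), g + g') \<in> adj T" by (simp add: adj_add)
    moreover have "p + p' \<in> T" using that adj_pair_add unfolding D_def T_def by blast
    ultimately show ?thesis unfolding D_def by blast
  qed
  show "scaleC a p \<in> D" if "p \<in> D" for a p
  proof -
    from that obtain g where "(snd p, g) \<in> adj T" unfolding D_def by auto
    hence "(snd (scaleC a p), scaleC a g) \<in> adj T" by (cases p) (simp add: adj_scale)
    moreover have "scaleC a p \<in> T" using that adj_pair_scale unfolding D_def T_def by blast
    ultimately show ?thesis unfolding D_def by blast
  qed
qed

text \<open>Density of \<open>dom T*T\<close>: the projection of \<open>(f, k)\<close> onto the closure of the graph of \<open>T\<close>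
  restricted to \<open>dom T*T\<close> differs from \<open>(f, k)\<close> by an element of \<open>{0} \<times> mul T\<close>, which vanishes
  because \<open>k \<bottom> mul T\<close>.\<close>

lemma adj_approx_by_dom_adj_adj:
  fixes J :: "('b::{complex_inner,complete_space} \<times> 'a::{complex_inner,complete_space}) set"
  defines "T \<equiv> adj J"
  assumes fk: "(f, k) \<in> T" and perp: "\<And>m. (0, m) \<in> T \<Longrightarrow> cinner m k = 0"
  shows "\<exists>y \<kappa> \<gamma>. (\<forall>n. (y n, \<kappa> n) \<in> T \<and> (\<kappa> n, \<gamma> n) \<in> adj T) \<and> y \<longlonglongrightarrow> f \<and> \<kappa> \<longlonglongrightarrow> k"
proof -
  define D where "D = {p. p \<in> T \<and> snd p \<in> Domain (adj T)}"
  have "\<exists>p0. (\<exists>s. (\<forall>n. s n \<in> D) \<and> s \<longlonglongrightarrow> p0) \<and> (\<forall>p\<in>D. cinner p p0 = cinner p (f, k))"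
    unfolding D_def T_def by (rule projection_onto_closure_graph_dom_comp_adj)
  then obtain s p0 where sD: "\<And>n. s n \<in> D" and sp0: "s \<longlonglongrightarrow> p0"
    and rep: "\<And>p. p \<in> D \<Longrightarrow> cinner p p0 = cinner p (f, k)" by blast
  obtain a0 b0 where p0: "p0 = (a0, b0)" by fastforce
  have "s n \<in> adj J" for n using sD[of n] unfolding D_def T_def by simp
  hence "p0 \<in> T" unfolding T_def using sp0 by (rule adj_closed_seq_pair)
  hence ab: "(f - a0, k - b0) \<in> T" using adj_diff[OF fk[unfolded T_def]] unfolding p0 T_def by blast
  have "f - a0 = 0"
  proof (rule adj_orthogonal_dom_comp_imp_zero[OF ab[unfolded T_def], folded T_def])
    fix y \<kappa> g assume "(y, \<kappa>) \<in> T" "(\<kappa>, g) \<in> adj T"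
    hence "(y, \<kappa>) \<in> D" unfolding D_def by auto
    from rep[OF this] have "cinner y a0 + cinner \<kappa> b0 = cinner y f + cinner \<kappa> k" unfolding p0 by simp
    thus "cinner y (f - a0) + cinner \<kappa> (k - b0) = 0"
      by (simp only: cinner_diff_right add_diff_add[symmetric]) simp
  qed
  hence mul: "(0, k - b0) \<in> T" using ab by simp
  have "cinner (k - b0) (snd (s n)) = 0" for n
    using sD[of n] mul_orthogonal_dom_adj[OF mul] unfolding D_def by blast
  hence "cinner (k - b0) b0 = 0"
    using LIMSEQ_unique[OF tendsto_cinner[OF tendsto_const tendsto_snd[OF sp0]]] unfolding p0 by simp
  with perp[OF mul] have "cinner (k - b0) (k - b0) = 0" by (simp add: cinner_diff_right)
  hence p0_eq: "p0 = (f, k)" using \<open>f - a0 = 0\<close> unfolding p0 by (simp add: cinner_eq_zero_iff)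
  have "\<forall>n. \<exists>g. (snd (s n), g) \<in> adj T" using sD unfolding D_def by blast
  then obtain \<gamma> where \<gamma>: "\<And>n. (snd (s n), \<gamma> n) \<in> adj T" by metis
  show ?thesis
  proof (intro exI conjI allI)
    show "(fst (s n), snd (s n)) \<in> T" for n using sD[of n] unfolding D_def by simp
    show "(snd (s n), \<gamma> n) \<in> adj T" for n by (rule \<gamma>)
    show "(\<lambda>n. fst (s n)) \<longlonglongrightarrow> f" "(\<lambda>n. snd (s n)) \<longlonglongrightarrow> k"
      using tendsto_fst[OF sp0] tendsto_snd[OF sp0] unfolding p0_eq by simp_all
  qed
qed

section \<open>Forms of semibounded selfadjoint relations\<close>

lemma selfadjoint_symmetric:
  assumes "selfadjoint H" "(x, x') \<in> H" "(y, y') \<in> H"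
  shows "cinner x' y = cinner x y'"
proof -
  have "(y, y') \<in> adj H" using assms by (simp add: selfadjoint_def)
  from adjD[OF this assms(2)] show ?thesis .
qed

lemma selfadjoint_add: "selfadjoint H \<Longrightarrow> (x, x') \<in> H \<Longrightarrow> (y, y') \<in> H \<Longrightarrow> (x + y, x' + y') \<in> H"
  using adj_add[of x x' H y y'] by (simp add: selfadjoint_def)

lemma selfadjoint_diff: "selfadjoint H \<Longrightarrow> (x, x') \<in> H \<Longrightarrow> (y, y') \<in> H \<Longrightarrow> (x - y, x' - y') \<in> H"
  using adj_diff[of x x' H y y'] by (simp add: selfadjoint_def)

lemma selfadjoint_scale: "selfadjoint H \<Longrightarrow> (x, x') \<in> H \<Longrightarrow> (scaleC a x, scaleC a x') \<in> H"
  using adj_scale[of x x' H a] by (simp add: selfadjoint_def)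

lemma selfadjoint_minus: "selfadjoint H \<Longrightarrow> (x, x') \<in> H \<Longrightarrow> (- x, - x') \<in> H"
  using adj_minus[of x x' H] by (simp add: selfadjoint_def)

lemma selfadjoint_Domain_diff: "selfadjoint H \<Longrightarrow> x \<in> Domain H \<Longrightarrow> y \<in> Domain H \<Longrightarrow> x - y \<in> Domain H"
  by (auto intro: selfadjoint_diff)

lemma cinner_selfadjoint_real:
  assumes "selfadjoint H" "(x, x') \<in> H"
  shows "cinner x' x = complex_of_real (Re (cinner x' x))"
proof -
  have "cinner x' x = cinner x x'" by (rule selfadjoint_symmetric[OF assms(1,2,2)])
  also have "\<dots> = cnj (cinner x' x)" by (rule cinner_commute)
  finally have "Im (cinner x' x) = Im (cnj (cinner x' x))" by (rule arg_cong)
  hence "Im (cinner x' x) = 0" by simp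
  thus ?thesis by (simp add: complex_eq_iff)
qed

lemma tq_selfadjoint:
  assumes "selfadjoint H" "(x, x') \<in> H"
  shows "tq H x = cinner x' x"
proof -
  define x'' where "x'' = (SOME x''. (x, x'') \<in> H)"
  have "(x, x'') \<in> H" unfolding x''_def by (rule someI[of _ x'], rule assms(2))
  have a: "cinner x' x = cinner x x''" by (rule selfadjoint_symmetric[OF assms(1,2) \<open>(x, x'') \<in> H\<close>])
  have b: "cinner x' x = cinner x x'" by (rule selfadjoint_symmetric[OF assms(1,2,2)])
  have "tq H x = cinner x'' x" unfolding tq_def x''_def ..
  also have "\<dots> = cnj (cinner x x'')" by (rule cinner_commute)
  also have "\<dots> = cnj (cinner x x')" using a b by simp
  also have "\<dots> = cinner x' x" by (rule cinner_commute[symmetric])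
  finally show ?thesis .
qed

definition tq_excess :: "('a::complex_inner \<times> 'a) set \<Rightarrow> real \<Rightarrow> 'a \<Rightarrow> real" where
  "tq_excess H b x = Re (tq H x) - b * (norm x)\<^sup>2"

lemma tq_excess_eq:
  assumes "selfadjoint H" "(x, x') \<in> H"
  shows "tq_excess H b x = Re (cinner x' x) - b * (norm x)\<^sup>2"
  using tq_selfadjoint[OF assms] by (simp add: tq_excess_def)

lemma tq_excess_nonneg:
  assumes "selfadjoint H" "bounded_below_by b H" "x \<in> Domain H"
  shows "tq_excess H b x \<ge> 0"
proof -
  from assms(3) obtain x' where xx: "(x, x') \<in> H" by auto
  have "complex_of_real (b * (norm x)\<^sup>2) \<le> cinner x' x"
    using assms(2) xx unfolding bounded_below_by_def by auto
  hence "b * (norm x)\<^sup>2 \<le> Re (cinner x' x)" by (simp add: less_eq_complex_def)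
  thus ?thesis using tq_excess_eq[OF assms(1) xx] by simp
qed

lemma tq_excess_add_scaleC:
  assumes sa: "selfadjoint H" and xx: "(x, x') \<in> H" and yy: "(y, y') \<in> H"
  shows "tq_excess H b (y + scaleC t x) =
         tq_excess H b y + 2 * Re (t * cinner (x' - scaleC (complex_of_real b) x) y) + (cmod t)\<^sup>2 * tq_excess H b x"
proof -
  have uu: "(y + scaleC t x, y' + scaleC t x') \<in> H" by (rule selfadjoint_add[OF sa yy selfadjoint_scale[OF sa xx]])
  have h: "cinner y' x = cnj (cinner x' y)"
    using selfadjoint_symmetric[OF sa yy xx] by (simp add: cinner_commute[of y x'])
  have e1: "cinner (y' + scaleC t x') (y + scaleC t x) =
        cinner y' y + cnj (t * cinner x' y) + t * cinner x' y + (t * cnj t) * cinner x' x"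
    by (simp add: cinner_add_left cinner_add_right cinner_scaleC_left cinner_scaleC_right h algebra_simps)
  have tt: "t * cnj t = complex_of_real ((cmod t)\<^sup>2)" by (rule complex_norm_square[symmetric])
  have xr: "cinner x' x = complex_of_real (Re (cinner x' x))" by (rule cinner_selfadjoint_real[OF sa xx])
  have F1: "Re (cinner (y' + scaleC t x') (y + scaleC t x)) =
        Re (cinner y' y) + 2 * Re (t * cinner x' y) + (cmod t)\<^sup>2 * Re (cinner x' x)"
    unfolding e1 tt by (subst xr) (simp del: of_real_power)
  have F2: "(norm (y + scaleC t x))\<^sup>2 = (norm y)\<^sup>2 + 2 * Re (t * cinner x y) + (cmod t)\<^sup>2 * (norm x)\<^sup>2"
    by (rule power2_norm_add_scaleC)
  have F3: "Re (t * cinner (x' - scaleC (complex_of_real b) x) y) = Re (t * cinner x' y) - b * Re (t * cinner x y)"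
    by (simp add: cinner_diff_left cinner_scaleC_left right_diff_distrib mult.left_commute)
  show ?thesis
    unfolding tq_excess_eq[OF sa uu] tq_excess_eq[OF sa xx] tq_excess_eq[OF sa yy] F1 F2 F3
    by (simp only: algebra_simps)
qed

lemma tq_excess_Cauchy_Schwarz:
  assumes sa: "selfadjoint H" and bb: "bounded_below_by b H" and xx: "(x, x') \<in> H" and yy: "(y, y') \<in> H"
  shows "(cmod (cinner (x' - scaleC (complex_of_real b) x) y))\<^sup>2 \<le> tq_excess H b y * tq_excess H b x"
proof (rule cmod_sq_le_of_quadratic_nonneg)
  show "0 \<le> tq_excess H b y" using tq_excess_nonneg[OF sa bb] yy by blast
  show "0 \<le> tq_excess H b x" using tq_excess_nonneg[OF sa bb] xx by blast
  fix t
  have "y + scaleC t x \<in> Domain H" using selfadjoint_add[OF sa yy selfadjoint_scale[OF sa xx]] by blast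
  hence "0 \<le> tq_excess H b (y + scaleC t x)" by (rule tq_excess_nonneg[OF sa bb])
  thus "0 \<le> tq_excess H b y + 2 * Re (t * cinner (x' - scaleC (complex_of_real b) x) y) + (cmod t)\<^sup>2 * tq_excess H b x"
    by (simp only: tq_excess_add_scaleC[OF sa xx yy])
qed

lemma sqrt_tq_excess_add_le:
  assumes sa: "selfadjoint H" and bb: "bounded_below_by b H" and x: "x \<in> Domain H" and y: "y \<in> Domain H"
  shows "sqrt (tq_excess H b (y + x)) \<le> sqrt (tq_excess H b y) + sqrt (tq_excess H b x)"
proof -
  from x obtain x' where xx: "(x, x') \<in> H" by auto
  from y obtain y' where yy: "(y, y') \<in> H" by auto
  define z where "z = cinner (x' - scaleC (complex_of_real b) x) y"
  have e: "tq_excess H b (y + x) = tq_excess H b y + 2 * Re z + tq_excess H b x"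
    using tq_excess_add_scaleC[OF sa xx yy, where t=1 and b=b] unfolding z_def by (simp add: scaleC_one)
  have qy: "tq_excess H b y \<ge> 0" by (rule tq_excess_nonneg[OF sa bb y])
  have qx: "tq_excess H b x \<ge> 0" by (rule tq_excess_nonneg[OF sa bb x])
  have "(cmod z)\<^sup>2 \<le> tq_excess H b y * tq_excess H b x" unfolding z_def by (rule tq_excess_Cauchy_Schwarz[OF sa bb xx yy])
  hence "cmod z \<le> sqrt (tq_excess H b y * tq_excess H b x)" by (rule real_le_rsqrt)
  hence "Re z \<le> sqrt (tq_excess H b y) * sqrt (tq_excess H b x)"
    using complex_Re_le_cmod[of z] by (simp add: real_sqrt_mult)
  hence "tq_excess H b (y + x) \<le> (sqrt (tq_excess H b y) + sqrt (tq_excess H b x))\<^sup>2"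
    unfolding e power2_sum using qx qy by simp
  hence "sqrt (tq_excess H b (y + x)) \<le> sqrt ((sqrt (tq_excess H b y) + sqrt (tq_excess H b x))\<^sup>2)"
    by (rule real_sqrt_le_mono)
  also have "\<dots> = sqrt (tq_excess H b y) + sqrt (tq_excess H b x)" using qx qy by simp
  finally show ?thesis .
qed

lemma tq_excess_minus:
  assumes sa: "selfadjoint H" and x: "x \<in> Domain H"
  shows "tq_excess H b (- x) = tq_excess H b x"
proof -
  from x obtain x' where xx: "(x, x') \<in> H" by auto
  show ?thesis using tq_excess_eq[OF sa xx] tq_excess_eq[OF sa selfadjoint_minus[OF sa xx]]
    by (simp add: cinner_minus_left cinner_minus_right)
qed

lemma abs_sqrt_tq_excess_diff_le:
  assumes sa: "selfadjoint H" and bb: "bounded_below_by b H" and x: "x \<in> Domain H" and y: "y \<in> Domain H"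
  shows "\<bar>sqrt (tq_excess H b x) - sqrt (tq_excess H b y)\<bar> \<le> sqrt (tq_excess H b (x - y))"
proof -
  have d1: "x - y \<in> Domain H" by (rule selfadjoint_Domain_diff[OF sa x y])
  have d2: "y - x \<in> Domain H" by (rule selfadjoint_Domain_diff[OF sa y x])
  have "sqrt (tq_excess H b (y + (x - y))) \<le> sqrt (tq_excess H b y) + sqrt (tq_excess H b (x - y))"
    by (rule sqrt_tq_excess_add_le[OF sa bb d1 y])
  hence a: "sqrt (tq_excess H b x) \<le> sqrt (tq_excess H b y) + sqrt (tq_excess H b (x - y))" by simp
  have "sqrt (tq_excess H b (x + (y - x))) \<le> sqrt (tq_excess H b x) + sqrt (tq_excess H b (y - x))"
    by (rule sqrt_tq_excess_add_le[OF sa bb d2 x])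
  moreover have "tq_excess H b (y - x) = tq_excess H b (x - y)"
    using tq_excess_minus[OF sa d1, of b] by simp
  ultimately have b: "sqrt (tq_excess H b y) \<le> sqrt (tq_excess H b x) + sqrt (tq_excess H b (x - y))" by simp
  from a b show ?thesis by linarith
qed

lemma tq_excess_le:
  "tq_excess H b x \<le> cmod (tq H x) + \<bar>b\<bar> * (norm x)\<^sup>2"
proof -
  have "Re (tq H x) \<le> cmod (tq H x)" by (rule complex_Re_le_cmod)
  moreover have "- (b * (norm x)\<^sup>2) \<le> \<bar>b\<bar> * (norm x)\<^sup>2"
    by (metis abs_ge_minus_self abs_mult abs_power2 abs_norm_cancel abs_ge_self
        minus_mult_left mult_right_mono zero_le_power2)
  ultimately show ?thesis unfolding tq_excess_def by linarith
qed

lemma Cauchy_scaled_power2_norm: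
  fixes w :: "nat \<Rightarrow> 'x::real_normed_vector"
  assumes "w \<longlonglongrightarrow> f" and e: "e > 0"
  shows "\<exists>N. \<forall>n\<ge>N. \<forall>m\<ge>N. \<bar>b\<bar> * (norm (w n - w m))\<^sup>2 < e"
proof -
  have pos: "e / (\<bar>b\<bar> + 1) > 0" using e by (simp add: add_nonneg_pos)
  then obtain N where N: "\<And>n m. n \<ge> N \<Longrightarrow> m \<ge> N \<Longrightarrow> norm (w n - w m) < sqrt (e / (\<bar>b\<bar> + 1))"
    using convergent_imp_Cauchy_norm[OF assms(1)] by (meson real_sqrt_gt_zero)
  have "\<bar>b\<bar> * (norm (w n - w m))\<^sup>2 < e" if "n \<ge> N" "m \<ge> N" for n m
  proof -
    have "(norm (w n - w m))\<^sup>2 < e / (\<bar>b\<bar> + 1)"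
      using power_strict_mono[OF N[OF that] norm_ge_zero, of 2] pos by simp
    hence "(\<bar>b\<bar> + 1) * (norm (w n - w m))\<^sup>2 < e"
      by (simp add: field_simps add_nonneg_pos)
    thus ?thesis
      using zero_le_power2[of "norm (w n - w m)"] distrib_right[of "\<bar>b\<bar>" 1 "(norm (w n - w m))\<^sup>2"]
      by linarith
  qed
  thus ?thesis by blast
qed

lemma form_approx_tq_excess_Cauchy:
  assumes fa: "form_approx H f w" and e: "e > 0"
  shows "\<exists>N. \<forall>n\<ge>N. \<forall>m\<ge>N. tq_excess H b (w n - w m) < e"
proof -
  obtain N1 where N1: "\<And>n m. n \<ge> N1 \<Longrightarrow> m \<ge> N1 \<Longrightarrow> cmod (tq H (w n - w m)) < e / 2"
    using fa e unfolding form_approx_def by (meson half_gt_zero)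
  obtain N2 where N2: "\<And>n m. n \<ge> N2 \<Longrightarrow> m \<ge> N2 \<Longrightarrow> \<bar>b\<bar> * (norm (w n - w m))\<^sup>2 < e / 2"
    using Cauchy_scaled_power2_norm[of w f "e / 2" b] fa e unfolding form_approx_def by auto
  have "tq_excess H b (w n - w m) < e" if "n \<ge> max N1 N2" "m \<ge> max N1 N2" for n m
    using tq_excess_le[of H b "w n - w m"] N1[of n m] N2[of n m] that by simp
  thus ?thesis by blast
qed

lemma form_approx_tq_excess_converges:
  assumes sa: "selfadjoint H" and bb: "bounded_below_by b H" and fa: "form_approx H f w"
  shows "\<exists>r\<ge>0. (\<lambda>n. tq_excess H b (w n)) \<longlonglongrightarrow> r \<and> (\<lambda>n. tq H (w n)) \<longlonglongrightarrow> complex_of_real (r + b * (norm f)\<^sup>2)"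
proof -
  from fa have wD: "\<And>n. w n \<in> Domain H" and wf: "w \<longlonglongrightarrow> f" unfolding form_approx_def by auto
  define \<rho> where "\<rho> = (\<lambda>n. sqrt (tq_excess H b (w n)))"
  have "\<exists>r0. \<rho> \<longlonglongrightarrow> r0"
  proof (rule Cauchy_norm_imp_convergent)
    fix e :: real assume e: "e > 0"
    hence "e\<^sup>2 > 0" by simp
    from form_approx_tq_excess_Cauchy[OF fa this] obtain N where N: "\<And>n m. n \<ge> N \<Longrightarrow> m \<ge> N \<Longrightarrow> tq_excess H b (w n - w m) < e\<^sup>2"
      by blast
    have "norm (\<rho> n - \<rho> m) < e" if "n \<ge> N" "m \<ge> N" for n m
    proof -
      have "norm (\<rho> n - \<rho> m) \<le> sqrt (tq_excess H b (w n - w m))"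
        unfolding \<rho>_def real_norm_def by (rule abs_sqrt_tq_excess_diff_le[OF sa bb wD wD])
      also have "\<dots> < sqrt (e\<^sup>2)" using N[OF that] by (simp only: real_sqrt_less_iff)
      also have "\<dots> = e" using e by simp
      finally show ?thesis .
    qed
    thus "\<exists>N. \<forall>n\<ge>N. \<forall>m\<ge>N. norm (\<rho> n - \<rho> m) < e" by blast
  qed
  then obtain r0 where r0: "\<rho> \<longlonglongrightarrow> r0" by blast
  have r0pos: "r0 \<ge> 0" by (rule LIMSEQ_le_const[OF r0]) (use tq_excess_nonneg[OF sa bb wD] in \<open>simp add: \<rho>_def\<close>)
  have qeq: "tq_excess H b (w n) = (\<rho> n)\<^sup>2" for n
    unfolding \<rho>_def using tq_excess_nonneg[OF sa bb wD[of n]] by simp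
  have l1: "(\<lambda>n. tq_excess H b (w n)) \<longlonglongrightarrow> r0\<^sup>2"
    unfolding qeq by (intro tendsto_power r0)
  have teq: "tq H (w n) = complex_of_real (tq_excess H b (w n) + b * (norm (w n))\<^sup>2)" for n
  proof -
    from wD[of n] obtain x' where xx: "(w n, x') \<in> H" by auto
    have "tq H (w n) = complex_of_real (Re (tq H (w n)))"
      using cinner_selfadjoint_real[OF sa xx] tq_selfadjoint[OF sa xx] by simp
    thus ?thesis by (simp add: tq_excess_def)
  qed
  have l2: "(\<lambda>n. tq H (w n)) \<longlonglongrightarrow> complex_of_real (r0\<^sup>2 + b * (norm f)\<^sup>2)"
    unfolding teq by (intro tendsto_of_real tendsto_add l1 tendsto_mult tendsto_const tendsto_power tendsto_norm wf)
  have "r0\<^sup>2 \<ge> 0" by simp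
  with l1 l2 show ?thesis by blast
qed

lemma form_approx_tq_excess_dist:
  assumes sa: "selfadjoint H" and bb: "bounded_below_by b H" and fa: "form_approx H f w"
    and ff: "(f, f') \<in> H" and eps: "\<epsilon> > 0"
  shows "\<exists>N. \<forall>n\<ge>N. tq_excess H b (w n - f) \<le> \<epsilon>"
proof -
  from fa have wD: "\<And>n. w n \<in> Domain H" and wf: "w \<longlonglongrightarrow> f" unfolding form_approx_def by auto
  have fD: "f \<in> Domain H" using ff by auto
  from form_approx_tq_excess_Cauchy[OF fa eps] obtain N where N: "\<And>n m. n \<ge> N \<Longrightarrow> m \<ge> N \<Longrightarrow> tq_excess H b (w n - w m) < \<epsilon>"
    by blast
  have "tq_excess H b (w n - f) \<le> \<epsilon>" if n: "n \<ge> N" for n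
  proof -
    define e where "e = w n - f"
    have eD: "e \<in> Domain H" unfolding e_def by (rule selfadjoint_Domain_diff[OF sa wD fD])
    then obtain e' where ee: "(e, e') \<in> H" by auto
    define v where "v = e' - scaleC (complex_of_real b) e"
    have q0: "tq_excess H b e \<ge> 0" by (rule tq_excess_nonneg[OF sa bb eD])
    have bnd: "(cmod (cinner v (w n - w m)))\<^sup>2 \<le> \<epsilon> * tq_excess H b e" if m: "m \<ge> N" for m
    proof -
      have yD: "w n - w m \<in> Domain H" by (rule selfadjoint_Domain_diff[OF sa wD wD])
      then obtain y' where yy: "(w n - w m, y') \<in> H" by auto
      have "(cmod (cinner v (w n - w m)))\<^sup>2 \<le> tq_excess H b (w n - w m) * tq_excess H b e"
        unfolding v_def by (rule tq_excess_Cauchy_Schwarz[OF sa bb ee yy])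
      also have "\<dots> \<le> \<epsilon> * tq_excess H b e"
        using N[OF n m] q0 by (intro mult_right_mono) auto
      finally show ?thesis .
    qed
    have lim: "(\<lambda>m. (cmod (cinner v (w n - w m)))\<^sup>2) \<longlonglongrightarrow> (cmod (cinner v e))\<^sup>2"
      unfolding e_def by (intro tendsto_power tendsto_norm tendsto_cinner tendsto_const tendsto_diff wf)
    have "(cmod (cinner v e))\<^sup>2 \<le> \<epsilon> * tq_excess H b e"
      by (rule tendsto_le[OF sequentially_bot tendsto_const lim]) (use bnd in \<open>auto simp: eventually_sequentially\<close>)
    moreover have "Re (cinner v e) = tq_excess H b e"
      unfolding v_def tq_excess_eq[OF sa ee] by (simp add: cinner_diff_left cinner_scaleC_left Re_cinner_self)
    moreover have "(Re (cinner v e))\<^sup>2 \<le> (cmod (cinner v e))\<^sup>2"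
      using power_mono[OF abs_Re_le_cmod[of "cinner v e"] abs_ge_zero, of 2] by simp
    ultimately have "(tq_excess H b e)\<^sup>2 \<le> \<epsilon> * tq_excess H b e" by simp
    thus ?thesis unfolding e_def[symmetric]
      using q0 eps by (cases "tq_excess H b e = 0") (simp_all add: power2_eq_square mult_le_cancel_right)
  qed
  thus ?thesis by blast
qed

lemma form_approx_tq_excess_tendsto_Domain:
  assumes sa: "selfadjoint H" and bb: "bounded_below_by b H" and fa: "form_approx H f w"
    and ff: "(f, f') \<in> H"
  shows "(\<lambda>n. tq_excess H b (w n)) \<longlonglongrightarrow> tq_excess H b f"
proof -
  from fa have wD: "\<And>n. w n \<in> Domain H" unfolding form_approx_def by auto
  have fD: "f \<in> Domain H" using ff by auto
  have rl: "(\<lambda>n. sqrt (tq_excess H b (w n))) \<longlonglongrightarrow> sqrt (tq_excess H b f)"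
  proof (rule LIMSEQ_I)
    fix r :: real assume r: "r > 0"
    hence "(r / 2)\<^sup>2 > 0" by simp
    from form_approx_tq_excess_dist[OF sa bb fa ff this] obtain N where N: "\<And>n. n \<ge> N \<Longrightarrow> tq_excess H b (w n - f) \<le> (r / 2)\<^sup>2"
      by blast
    have "norm (sqrt (tq_excess H b (w n)) - sqrt (tq_excess H b f)) < r" if "n \<ge> N" for n
    proof -
      have "norm (sqrt (tq_excess H b (w n)) - sqrt (tq_excess H b f)) \<le> sqrt (tq_excess H b (w n - f))"
        unfolding real_norm_def by (rule abs_sqrt_tq_excess_diff_le[OF sa bb wD fD])
      also have "\<dots> \<le> sqrt ((r / 2)\<^sup>2)" using N[OF that] by (rule real_sqrt_le_mono)
      also have "\<dots> = r / 2" using r by simp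
      also have "\<dots> < r" using r by simp
      finally show ?thesis .
    qed
    thus "\<exists>no. \<forall>n\<ge>no. norm (sqrt (tq_excess H b (w n)) - sqrt (tq_excess H b f)) < r" by blast
  qed
  have "(\<lambda>n. (sqrt (tq_excess H b (w n)))\<^sup>2) \<longlonglongrightarrow> (sqrt (tq_excess H b f))\<^sup>2" by (intro tendsto_power rl)
  moreover have "(\<lambda>n. (sqrt (tq_excess H b (w n)))\<^sup>2) = (\<lambda>n. tq_excess H b (w n))"
    using tq_excess_nonneg[OF sa bb wD] by simp
  moreover have "(sqrt (tq_excess H b f))\<^sup>2 = tq_excess H b f" using tq_excess_nonneg[OF sa bb fD] by simp
  ultimately show ?thesis by simp
qed

lemma form_val_eq_lim_tq_excess:
  assumes sa: "selfadjoint H" and bb: "bounded_below_by b H" and fD: "f \<in> form_dom H"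
  shows "\<exists>w r. form_approx H f w \<and> (\<lambda>n. tq_excess H b (w n)) \<longlonglongrightarrow> r \<and> form_val H f = r + b * (norm f)\<^sup>2"
proof -
  define w where "w = (SOME u. form_approx H f u)"
  have "\<exists>u. form_approx H f u" using fD unfolding form_dom_def by blast
  hence fa: "form_approx H f w" unfolding w_def by (rule someI_ex)
  then obtain r where r: "(\<lambda>n. tq_excess H b (w n)) \<longlonglongrightarrow> r"
      "(\<lambda>n. tq H (w n)) \<longlonglongrightarrow> complex_of_real (r + b * (norm f)\<^sup>2)"
    using form_approx_tq_excess_converges[OF sa bb] by blast
  have "form_val H f = r + b * (norm f)\<^sup>2"
    unfolding form_val_def w_def[symmetric] using limI[OF r(2)] by simp
  with fa r(1) show ?thesis by blast
qed

lemma form_approx_dominated_convergent: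
  fixes k :: "nat \<Rightarrow> 'x::{real_normed_vector, complete_space}"
  assumes fa: "form_approx H f w"
    and dominated: "\<And>n m. (norm (k n - k m))\<^sup>2 \<le> tq_excess H b (w n - w m)"
  shows "\<exists>k0. k \<longlonglongrightarrow> k0"
proof (rule Cauchy_norm_imp_convergent)
  fix e :: real assume e: "e > 0"
  then obtain N where N: "\<And>n m. n \<ge> N \<Longrightarrow> m \<ge> N \<Longrightarrow> tq_excess H b (w n - w m) < e\<^sup>2"
    using form_approx_tq_excess_Cauchy[OF fa, of "e\<^sup>2" b] by auto
  have "norm (k n - k m) < e" if "n \<ge> N" "m \<ge> N" for n m
  proof -
    have "(norm (k n - k m))\<^sup>2 < e\<^sup>2" using dominated[of n m] N[OF that] by linarith
    thus ?thesis using e by (simp add: power_less_imp_less_base)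
  qed
  thus "\<exists>N. \<forall>n\<ge>N. \<forall>m\<ge>N. norm (k n - k m) < e" by blast
qed

section \<open>The Kre\<breve>in type extension\<close>

lemma lin_rel_zero: "is_lin_rel S \<Longrightarrow> (0, 0) \<in> S"
  unfolding is_lin_rel_def by blast
lemma lin_rel_add: "is_lin_rel S \<Longrightarrow> (x, x') \<in> S \<Longrightarrow> (y, y') \<in> S \<Longrightarrow> (x + y, x' + y') \<in> S"
  unfolding is_lin_rel_def by blast
lemma lin_rel_scaleC: "is_lin_rel S \<Longrightarrow> (x, x') \<in> S \<Longrightarrow> (scaleC a x, scaleC a x') \<in> S"
  unfolding is_lin_rel_def by blast

lemma representing_map_add:
  "representing_map S c Q \<Longrightarrow> x \<in> Domain S \<Longrightarrow> y \<in> Domain S \<Longrightarrow> Q (x + y) = Q x + Q y"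
  unfolding representing_map_def by blast
lemma representing_map_scaleC:
  "representing_map S c Q \<Longrightarrow> x \<in> Domain S \<Longrightarrow> Q (scaleC a x) = scaleC a (Q x)"
  unfolding representing_map_def by blast
lemma representing_map_cinner: "representing_map S c Q \<Longrightarrow> (x, x') \<in> S \<Longrightarrow> y \<in> Domain S \<Longrightarrow>
    cinner x' y = complex_of_real c * cinner x y + cinner (Q x) (Q y)"
  unfolding representing_map_def by blast

lemma companion_zero:
  assumes "is_lin_rel S" "representing_map S c Q"
  shows "(0, 0) \<in> companion S c Q"
proof -
  have "(0, 0) \<in> S" by (rule lin_rel_zero[OF assms(1)])
  moreover from this have "Q 0 = 0"
    using representing_map_scaleC[OF assms(2), of 0 0] by auto
  ultimately show ?thesis unfolding companion_def by force
qed

lemma companion_add: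
  assumes lin: "is_lin_rel S" and rep: "representing_map S c Q"
    and "(q, g) \<in> companion S c Q" "(q', g') \<in> companion S c Q"
  shows "(q + q', g + g') \<in> companion S c Q"
proof -
  from assms(3,4) obtain \<phi> \<phi>' \<psi> \<psi>' where
    p: "(\<phi>, \<phi>') \<in> S" "q = Q \<phi>" "g = \<phi>' - scaleC (complex_of_real c) \<phi>" and
    p': "(\<psi>, \<psi>') \<in> S" "q' = Q \<psi>" "g' = \<psi>' - scaleC (complex_of_real c) \<psi>"
    unfolding companion_def by blast
  have "(\<phi> + \<psi>, \<phi>' + \<psi>') \<in> S" by (rule lin_rel_add[OF lin p(1) p'(1)])
  moreover have "Q (\<phi> + \<psi>) = q + q'" using representing_map_add[OF rep] p p' by blast
  moreover have "(\<phi>' + \<psi>') - scaleC (complex_of_real c) (\<phi> + \<psi>) = g + g'"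
    unfolding p(3) p'(3) by (simp add: scaleC_add_right algebra_simps)
  ultimately show ?thesis unfolding companion_def by force
qed

lemma companion_scaleC:
  assumes lin: "is_lin_rel S" and rep: "representing_map S c Q" and "(q, g) \<in> companion S c Q"
  shows "(scaleC a q, scaleC a g) \<in> companion S c Q"
proof -
  from assms(3) obtain \<phi> \<phi>' where
    p: "(\<phi>, \<phi>') \<in> S" "q = Q \<phi>" "g = \<phi>' - scaleC (complex_of_real c) \<phi>"
    unfolding companion_def by blast
  have "(scaleC a \<phi>, scaleC a \<phi>') \<in> S" by (rule lin_rel_scaleC[OF lin p(1)])
  moreover have "Q (scaleC a \<phi>) = scaleC a q" using representing_map_scaleC[OF rep] p by blast
  moreover have "scaleC a \<phi>' - scaleC (complex_of_real c) (scaleC a \<phi>) = scaleC a g"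
    unfolding p(3) by (simp add: scaleC_diff_right scaleC_scaleC mult.commute)
  ultimately show ?thesis unfolding companion_def by force
qed

text \<open>Since \<open>t(S)[\<phi>] - c \<parallel>\<phi>\<parallel>\<^sup>2 = \<parallel>Q \<phi>\<parallel>\<^sup>2\<close>, the Cauchy-Schwarz inequality for \<open>t(H) - c\<close> bounds the
  functional \<open>Q \<phi> \<mapsto> (\<phi>' - c \<phi>, u)\<close> by \<open>(t(H)[u] - c \<parallel>u\<parallel>\<^sup>2)\<^sup>1\<^sup>/\<^sup>2 \<parallel>Q \<phi>\<parallel>\<close>.\<close>

lemma companion_cinner_bound:
  assumes rep: "representing_map S c Q" and sa: "selfadjoint H" and bb: "bounded_below_by c H"
    and SH: "S \<subseteq> H" and uu: "(u, u') \<in> H" and qg: "(q, g) \<in> companion S c Q"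
  shows "cmod (cinner g u) \<le> sqrt (tq_excess H c u) * norm q"
proof -
  from qg obtain \<phi> \<phi>' where p: "(\<phi>, \<phi>') \<in> S" "q = Q \<phi>" "g = \<phi>' - scaleC (complex_of_real c) \<phi>"
    unfolding companion_def by blast
  have pH: "(\<phi>, \<phi>') \<in> H" using p(1) SH by auto
  have "Re (cinner \<phi>' \<phi>) = c * (norm \<phi>)\<^sup>2 + (norm (Q \<phi>))\<^sup>2"
    using representing_map_cinner[OF rep p(1)] p(1) by (force simp: Re_cinner_self)
  hence "tq_excess H c \<phi> = (norm q)\<^sup>2" unfolding tq_excess_eq[OF sa pH] p(2) by simp
  hence "(cmod (cinner g u))\<^sup>2 \<le> tq_excess H c u * (norm q)\<^sup>2"
    using tq_excess_Cauchy_Schwarz[OF sa bb pH uu] unfolding p(3) by simp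
  hence "cmod (cinner g u) \<le> sqrt (tq_excess H c u * (norm q)\<^sup>2)" by (rule real_le_rsqrt)
  thus ?thesis by (simp add: real_sqrt_mult)
qed

text \<open>For \<open>T = J*\<close> this means \<open>\<kappa> \<in> closure (dom J)\<close>, and it selects a
  unique element of \<open>T f\<close>.\<close>

definition orth_mul :: "('a::complex_inner \<times> 'b::complex_inner) set \<Rightarrow> 'b \<Rightarrow> bool" where
  "orth_mul T \<kappa> \<longleftrightarrow> (\<forall>m. (0, m) \<in> T \<longrightarrow> cinner m \<kappa> = 0)"

lemma orth_mul_diff: "orth_mul T k \<Longrightarrow> orth_mul T k' \<Longrightarrow> orth_mul T (k - k')"
  unfolding orth_mul_def by (simp add: cinner_diff_right)

lemma orth_mul_lim:
  assumes "\<And>n. orth_mul T (\<kappa> n)" "\<kappa> \<longlonglongrightarrow> k"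
  shows "orth_mul T k"
  unfolding orth_mul_def
proof (intro allI impI)
  fix m assume "(0, m) \<in> T"
  hence "(\<lambda>n. cinner m (\<kappa> n)) = (\<lambda>n. 0)" using assms(1) unfolding orth_mul_def by simp
  thus "cinner m k = 0" using LIMSEQ_unique[OF tendsto_cinner[OF tendsto_const assms(2)]] by simp
qed

lemma orth_mul_unique:
  assumes "(f, k1) \<in> adj J" "(f, k2) \<in> adj J" "orth_mul (adj J) k1" "orth_mul (adj J) k2"
  shows "k1 = k2"
proof -
  have "(0, k1 - k2) \<in> adj J" using adj_diff[OF assms(1,2)] by simp
  hence "cinner (k1 - k2) (k1 - k2) = 0" using orth_mul_diff[OF assms(3,4)] unfolding orth_mul_def by blast
  thus ?thesis by (simp add: cinner_eq_zero_iff)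
qed

text \<open>The multivalued part of \<open>J*\<close> is the orthogonal complement of \<open>dom J\<close>.\<close>

lemma orth_mul_adj_if_lim_Domain:
  assumes "\<And>n. s n \<in> Domain J" "s \<longlonglongrightarrow> k"
  shows "orth_mul (adj J) k"
  unfolding orth_mul_def
proof (intro allI impI)
  fix m assume m: "(0, m) \<in> adj J"
  have "cinner (s n) m = 0" for n
    using assms(1)[of n] adjD[OF m] by fastforce
  hence "cinner k m = 0"
    using LIMSEQ_unique[OF tendsto_cinner[OF assms(2) tendsto_const]] by simp
  thus "cinner m k = 0" by (metis cinner_commute complex_cnj_zero)
qed

lemma companion_adj_representation:
  fixes S H :: "('a::{complex_inner, complete_space} \<times> 'a) set"
    and Q :: "'a \<Rightarrow> 'b::{complex_inner, complete_space}"
  assumes lin: "is_lin_rel S" and rep: "representing_map S c Q"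
    and sa: "selfadjoint H" and bb: "bounded_below_by c H" and SH: "S \<subseteq> H" and uu: "(u, u') \<in> H"
  shows "\<exists>k. (u, k) \<in> adj (companion S c Q) \<and> orth_mul (adj (companion S c Q)) k \<and>
    (norm k)\<^sup>2 \<le> tq_excess H c u"
proof -
  define J where "J = companion S c Q"
  define R where "R = {(q, cinner g u) | q g. (q, g) \<in> J}"
  have "tq_excess H c u \<ge> 0" using tq_excess_nonneg[OF sa bb] uu by blast
  have "\<exists>k. (\<exists>s. (\<forall>n. s n \<in> Domain R) \<and> s \<longlonglongrightarrow> k) \<and> (\<forall>(q, z)\<in>R. cinner q k = z) \<and>
      norm k \<le> sqrt (tq_excess H c u)"
  proof (rule bounded_functional_representation)
    show "(0, 0) \<in> R" unfolding R_def J_def using companion_zero[OF lin rep] by force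
    show "(q + q', z + z') \<in> R" if "(q, z) \<in> R" "(q', z') \<in> R" for q z q' z'
      using that companion_add[OF lin rep] unfolding R_def J_def by (force simp: cinner_add_left)
    show "(scaleC a q, a * z) \<in> R" if "(q, z) \<in> R" for a q z
      using that companion_scaleC[OF lin rep] unfolding R_def J_def by (force simp: cinner_scaleC_left)
    show "cmod z \<le> sqrt (tq_excess H c u) * norm q" if "(q, z) \<in> R" for q z
      using that companion_cinner_bound[OF rep sa bb SH uu] unfolding R_def J_def by force
  qed (simp add: \<open>tq_excess H c u \<ge> 0\<close>)
  then obtain k s where s: "\<And>n. s n \<in> Domain R" "s \<longlonglongrightarrow> k"
    and repr: "\<forall>(q, z)\<in>R. cinner q k = z" and nk: "norm k \<le> sqrt (tq_excess H c u)" by blast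
  have "(u, k) \<in> adj J" using repr unfolding mem_adj_iff R_def by force
  moreover have "orth_mul (adj J) k"
    by (rule orth_mul_adj_if_lim_Domain[OF _ s(2)]) (use s(1) in \<open>auto simp: R_def\<close>)
  moreover have "(norm k)\<^sup>2 \<le> tq_excess H c u"
    using power_mono[OF nk norm_ge_zero, of 2] \<open>tq_excess H c u \<ge> 0\<close> by simp
  ultimately show ?thesis unfolding J_def by blast
qed

lemma companion_adj_norm_le:
  fixes S H :: "('a::{complex_inner, complete_space} \<times> 'a) set"
    and Q :: "'a \<Rightarrow> 'b::{complex_inner, complete_space}"
  assumes lin: "is_lin_rel S" and rep: "representing_map S c Q"
    and sa: "selfadjoint H" and bb: "bounded_below_by c H" and SH: "S \<subseteq> H" and uu: "(u, u') \<in> H"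
    and uk: "(u, k) \<in> adj (companion S c Q)" and orth: "orth_mul (adj (companion S c Q)) k"
  shows "(norm k)\<^sup>2 \<le> tq_excess H c u"
  using companion_adj_representation[OF lin rep sa bb SH uu] orth_mul_unique[OF uk _ orth] by blast

lemma form_val_krein:
  fixes J :: "('b::{complex_inner,complete_space} \<times> 'a::{complex_inner,complete_space}) set"
    and c :: real
  defines "K \<equiv> rel_shift c (rel_comp (adj (adj J)) (adj J))"
  assumes fD: "f \<in> form_dom K"
  shows "\<exists>\<kappa>. (f, \<kappa>) \<in> adj J \<and> orth_mul (adj J) \<kappa> \<and> form_val K f = (norm \<kappa>)\<^sup>2 + c * (norm f)\<^sup>2"
proof -
  define v where "v = (SOME u. form_approx K f u)"
  have "\<exists>u. form_approx K f u" using fD unfolding form_dom_def by blast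
  hence fa: "form_approx K f v" unfolding v_def by (rule someI_ex)
  hence vD: "\<And>n. v n \<in> Domain K" and vf: "v \<longlonglongrightarrow> f" unfolding form_approx_def by auto
  have "\<forall>n. \<exists>\<kappa> \<gamma>. (v n, \<kappa>) \<in> adj J \<and> (\<kappa>, \<gamma>) \<in> adj (adj J)"
    using vD unfolding K_def mem_shift_comp_adj Domain_iff by blast
  then obtain \<kappa> \<gamma> where \<kappa>: "\<And>n. (v n, \<kappa> n) \<in> adj J" and \<gamma>: "\<And>n. (\<kappa> n, \<gamma> n) \<in> adj (adj J)"
    by metis
  have "tq K (v n - v m) = cinner (\<kappa> n - \<kappa> m) (\<kappa> n - \<kappa> m) + c * cinner (v n - v m) (v n - v m)"
    for n m unfolding K_def by (rule tq_shift_comp_adj[OF adj_diff[OF \<kappa> \<kappa>] adj_diff[OF \<gamma> \<gamma>]])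
  hence "tq_excess K c (v n - v m) = (norm (\<kappa> n - \<kappa> m))\<^sup>2" for n m
    unfolding tq_excess_def by (simp add: Re_cinner_self)
  hence "\<exists>k. \<kappa> \<longlonglongrightarrow> k" by (intro form_approx_dominated_convergent[OF fa, of \<kappa> c]) simp
  then obtain k where k: "\<kappa> \<longlonglongrightarrow> k" by blast
  have "(f, k) \<in> adj J" by (rule adj_closed_seq[OF \<kappa> vf k])
  moreover have "orth_mul (adj J) k"
    using orth_mul_lim[OF _ k] mul_orthogonal_dom_adj[OF _ \<gamma>] unfolding orth_mul_def by blast
  moreover have "form_val K f = (norm k)\<^sup>2 + c * (norm f)\<^sup>2"
  proof -
    have "tq K (v n) = complex_of_real ((norm (\<kappa> n))\<^sup>2 + c * (norm (v n))\<^sup>2)" for n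
      unfolding K_def by (simp add: tq_shift_comp_adj[OF \<kappa> \<gamma>] cinner_self_norm)
    hence "(\<lambda>n. tq K (v n)) \<longlonglongrightarrow> complex_of_real ((norm k)\<^sup>2 + c * (norm f)\<^sup>2)"
      by (simp only:) (intro tendsto_intros k vf)
    thus ?thesis unfolding form_val_def v_def[symmetric] using limI by fastforce
  qed
  ultimately show ?thesis by blast
qed

lemma form_dom_krein_if_orth_mul:
  fixes J :: "('b::{complex_inner,complete_space} \<times> 'a::{complex_inner,complete_space}) set"
    and c :: real
  defines "K \<equiv> rel_shift c (rel_comp (adj (adj J)) (adj J))"
  assumes fk: "(f, k) \<in> adj J" and orth: "orth_mul (adj J) k"
  shows "f \<in> form_dom K"
proof -
  obtain y \<kappa> \<gamma> where \<kappa>: "\<And>n. (y n, \<kappa> n) \<in> adj J" and \<gamma>: "\<And>n. (\<kappa> n, \<gamma> n) \<in> adj (adj J)"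
    and yf: "y \<longlonglongrightarrow> f" and \<kappa>k: "\<kappa> \<longlonglongrightarrow> k"
    using adj_approx_by_dom_adj_adj[OF fk] orth unfolding orth_mul_def by blast
  have "form_approx K f y"
    unfolding form_approx_def
  proof (intro conjI allI impI)
    show "y n \<in> Domain K" for n
      using \<kappa>[of n] \<gamma>[of n] unfolding K_def Domain_iff mem_shift_comp_adj by blast
    show "y \<longlonglongrightarrow> f" by (rule yf)
    fix e :: real assume e: "e > 0"
    obtain N1 where N1: "\<And>n m. n \<ge> N1 \<Longrightarrow> m \<ge> N1 \<Longrightarrow> \<bar>1\<bar> * (norm (\<kappa> n - \<kappa> m))\<^sup>2 < e / 2"
      using Cauchy_scaled_power2_norm[OF \<kappa>k, of "e / 2" 1] e by auto
    obtain N2 where N2: "\<And>n m. n \<ge> N2 \<Longrightarrow> m \<ge> N2 \<Longrightarrow> \<bar>c\<bar> * (norm (y n - y m))\<^sup>2 < e / 2"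
      using Cauchy_scaled_power2_norm[OF yf, of "e / 2" c] e by auto
    have "cmod (tq K (y n - y m)) < e" if "n \<ge> max N1 N2" "m \<ge> max N1 N2" for n m
    proof -
      have "tq K (y n - y m) = complex_of_real ((norm (\<kappa> n - \<kappa> m))\<^sup>2 + c * (norm (y n - y m))\<^sup>2)"
        unfolding K_def
        by (simp add: tq_shift_comp_adj[OF adj_diff[OF \<kappa> \<kappa>] adj_diff[OF \<gamma> \<gamma>]] cinner_self_norm)
      hence "cmod (tq K (y n - y m)) = \<bar>(norm (\<kappa> n - \<kappa> m))\<^sup>2 + c * (norm (y n - y m))\<^sup>2\<bar>"
        by (simp only: norm_of_real)
      also have "\<dots> \<le> \<bar>1\<bar> * (norm (\<kappa> n - \<kappa> m))\<^sup>2 + \<bar>c\<bar> * (norm (y n - y m))\<^sup>2"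
        by (simp add: abs_mult abs_triangle_ineq[THEN order_trans])
      finally show ?thesis using N1[of n m] N2[of n m] that by simp
    qed
    thus "\<exists>N. \<forall>n\<ge>N. \<forall>m\<ge>N. cmod (tq K (y n - y m)) < e" by blast
  qed
  thus ?thesis unfolding form_dom_def by blast
qed

text \<open>For \<open>w\<^sub>n\<close> approximating \<open>f \<in> dom t\<^sub>H\<close>, the representatives \<open>k\<^sub>n \<in> T w\<^sub>n\<close> orthogonal to \<open>mul T\<close>
  form a Cauchy sequence, since \<open>\<parallel>k\<^sub>n - k\<^sub>m\<parallel>\<^sup>2 \<le> t(H - c)[w\<^sub>n - w\<^sub>m]\<close>.\<close>

lemma form_dom_imp_companion_adj:
  fixes S H :: "('a::{complex_inner, complete_space} \<times> 'a) set"
    and Q :: "'a \<Rightarrow> 'b::{complex_inner, complete_space}" and c :: real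
  defines "J \<equiv> companion S c Q"
  assumes lin: "is_lin_rel S" and rep: "representing_map S c Q"
    and sa: "selfadjoint H" and SH: "S \<subseteq> H" and bb: "bounded_below_by c H"
    and fH: "f \<in> form_dom H"
  shows "\<exists>k. (f, k) \<in> adj J \<and> orth_mul (adj J) k \<and> (norm k)\<^sup>2 + c * (norm f)\<^sup>2 \<le> form_val H f"
proof -
  note adj_norm_le = companion_adj_norm_le[OF lin rep sa bb SH, folded J_def]
  obtain w r where fa: "form_approx H f w" and r: "(\<lambda>n. tq_excess H c (w n)) \<longlonglongrightarrow> r"
    and fv: "form_val H f = r + c * (norm f)\<^sup>2"
    using form_val_eq_lim_tq_excess[OF sa bb fH] by blast
  hence wf: "w \<longlonglongrightarrow> f" unfolding form_approx_def by simp
  have "\<forall>n. \<exists>w'. (w n, w') \<in> H" using fa unfolding form_approx_def by blast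
  then obtain w' where ww: "\<And>n. (w n, w' n) \<in> H" by metis
  have "\<forall>n. \<exists>k. (w n, k) \<in> adj J \<and> orth_mul (adj J) k"
    using companion_adj_representation[OF lin rep sa bb SH ww] unfolding J_def by blast
  then obtain k where wk: "\<And>n. (w n, k n) \<in> adj J" and orth: "\<And>n. orth_mul (adj J) (k n)" by metis
  have "(norm (k n - k m))\<^sup>2 \<le> tq_excess H c (w n - w m)" for n m
    by (rule adj_norm_le[OF selfadjoint_diff[OF sa ww ww] adj_diff[OF wk wk] orth_mul_diff[OF orth orth]])
  then obtain k0 where k0: "k \<longlonglongrightarrow> k0" using form_approx_dominated_convergent[OF fa] by blast
  have "\<forall>\<^sub>F n in sequentially. (norm (k n))\<^sup>2 \<le> tq_excess H c (w n)"
    using adj_norm_le[OF ww wk orth] by (auto intro: always_eventually)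
  hence "(norm k0)\<^sup>2 \<le> r" by (rule tendsto_le[OF sequentially_bot r tendsto_power[OF tendsto_norm[OF k0]]])
  moreover have "(f, k0) \<in> adj J" by (rule adj_closed_seq[OF wk wf k0])
  moreover have "orth_mul (adj J) k0" by (rule orth_mul_lim[OF orth k0])
  ultimately show ?thesis using fv by auto
qed

lemma form_le_krein_ext_if_bounded_below:
  fixes S H :: "('a::{complex_inner, complete_space} \<times> 'a) set"
    and Q :: "'a \<Rightarrow> 'b::{complex_inner, complete_space}"
  assumes lin: "is_lin_rel S" and rep: "representing_map S c Q"
    and sa: "selfadjoint H" and SH: "S \<subseteq> H" and bb: "bounded_below_by c H"
  shows "form_le (krein_ext S c Q) H"
  unfolding form_le_def
proof (intro conjI ballI subsetI)
  fix f assume fH: "f \<in> form_dom H"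
  obtain k where fk: "(f, k) \<in> adj (companion S c Q)" and orth: "orth_mul (adj (companion S c Q)) k"
    and le: "(norm k)\<^sup>2 + c * (norm f)\<^sup>2 \<le> form_val H f"
    using form_dom_imp_companion_adj[OF lin rep sa SH bb fH] by blast
  show fK: "f \<in> form_dom (krein_ext S c Q)"
    unfolding krein_ext_def by (rule form_dom_krein_if_orth_mul[OF fk orth])
  obtain \<kappa> where "(f, \<kappa>) \<in> adj (companion S c Q)" "orth_mul (adj (companion S c Q)) \<kappa>"
    and "form_val (krein_ext S c Q) f = (norm \<kappa>)\<^sup>2 + c * (norm f)\<^sup>2"
    using form_val_krein[OF fK[unfolded krein_ext_def]] unfolding krein_ext_def by blast
  with orth_mul_unique[OF fk _ orth] le show "form_val (krein_ext S c Q) f \<le> form_val H f" by simp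
qed

lemma form_val_selfadjoint:
  assumes sa: "selfadjoint H" and sb: "semibounded H" and ff: "(\<phi>, \<phi>') \<in> H"
  shows "\<phi> \<in> form_dom H \<and> form_val H \<phi> = Re (cinner \<phi>' \<phi>)"
proof -
  have "form_approx H \<phi> (\<lambda>n. \<phi>)"
    unfolding form_approx_def using ff by (auto simp: tq_def)
  hence fD: "\<phi> \<in> form_dom H" unfolding form_dom_def by blast
  from sb obtain b where bb: "bounded_below_by b H" unfolding semibounded_def by blast
  obtain w r where fa: "form_approx H \<phi> w" and r: "(\<lambda>n. tq_excess H b (w n)) \<longlonglongrightarrow> r"
    and fv: "form_val H \<phi> = r + b * (norm \<phi>)\<^sup>2"
    using form_val_eq_lim_tq_excess[OF sa bb fD] by blast
  have "r = tq_excess H b \<phi>"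
    using LIMSEQ_unique[OF r form_approx_tq_excess_tendsto_Domain[OF sa bb fa ff]] .
  with fv fD show ?thesis unfolding tq_excess_eq[OF sa ff] by simp
qed

lemma bounded_below_if_form_le_krein_ext:
  fixes S H :: "('a::{complex_inner, complete_space} \<times> 'a) set"
    and Q :: "'a \<Rightarrow> 'b::{complex_inner, complete_space}"
  assumes sa: "selfadjoint H" and sb: "semibounded H" and le: "form_le (krein_ext S c Q) H"
  shows "bounded_below_by c H"
  unfolding bounded_below_by_def
proof (intro ballI, clarify)
  fix \<phi> \<phi>' assume ff: "(\<phi>, \<phi>') \<in> H"
  from form_val_selfadjoint[OF sa sb ff] le
  have fK: "\<phi> \<in> form_dom (krein_ext S c Q)" and "form_val (krein_ext S c Q) \<phi> \<le> Re (cinner \<phi>' \<phi>)"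
    unfolding form_le_def by auto
  moreover obtain \<kappa> :: 'b where "form_val (krein_ext S c Q) \<phi> = (norm \<kappa>)\<^sup>2 + c * (norm \<phi>)\<^sup>2"
    using form_val_krein[OF fK[unfolded krein_ext_def]] unfolding krein_ext_def by blast
  ultimately have "c * (norm \<phi>)\<^sup>2 \<le> Re (cinner \<phi>' \<phi>)"
    using zero_le_power2[of "norm \<kappa>"] by linarith
  moreover have "Im (cinner \<phi>' \<phi>) = 0" using cinner_selfadjoint_real[OF sa ff] by (metis Im_complex_of_real)
  ultimately show "complex_of_real (c * (norm \<phi>)\<^sup>2) \<le> cinner \<phi>' \<phi>"
    by (simp add: less_eq_complex_def)
qed

theorem corollary6p3:
  fixes S H :: "('a::{complex_inner, complete_space} \<times> 'a) set"
    and Q :: "'a \<Rightarrow> 'b::{complex_inner, complete_space}"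
    and \<gamma> c :: real
  assumes "is_lin_rel S" and "semibounded S" and "lower_bound S \<gamma>"
    and "c \<le> \<gamma>"
    and "representing_map S c Q"
    and "selfadjoint H" and "semibounded H" and "S \<subseteq> H"
  shows "bounded_below_by c H \<longleftrightarrow> form_le (krein_ext S c Q) H"
  \<comment> \<open>\<open>c \<le> \<gamma>\<close> is needed only for the existence of \<open>Q\<close>, which is assumed.\<close>
  using form_le_krein_ext_if_bounded_below[OF assms(1,5,6,8)]
    bounded_below_if_form_le_krein_ext[OF assms(6,7)] by blast

end
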